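(* Let $A$ be an annihilator locally $C^{\ast}$-algebra and $I$ a closed two-sided ideal of $A$. Then $I$ and $A/I$ are annihilator locally $C^{\ast}$-algebras, and $A$ is topologically ${}^{\ast}$-isomorphic to the Cartesian product $I\times A/I$.
   Context: Locally $C^{\ast}$-algebra: complete Hausdorff locally convex ${}^{\ast}$-algebra over $\mathbb{C}$ with jointly continuous multiplication, topology given by $C^{\ast}$-seminorms. Annihilator algebra: for every closed left ideal $J$ and closed right ideal $K$, $\mathrm{ran}(J)=0\iff J=A$ and $\mathrm{lan}(K)=0\iff K=A$, where $\mathrm{lan}(S)=\{a:aS=0\}$, $\mathrm{ran}(S)=\{a:Sa=0\}$. *)

theory Defs
  imports "HOL-Analysis.Analysis"
begin

record 'a lcs_alg =
  lcarrier :: "'a set"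
  lzero    :: 'a
  ladd     :: "'a \<Rightarrow> 'a \<Rightarrow> 'a"
  lsmult   :: "complex \<Rightarrow> 'a \<Rightarrow> 'a"
  lmult    :: "'a \<Rightarrow> 'a \<Rightarrow> 'a"
  lstar    :: "'a \<Rightarrow> 'a"
  lsemis   :: "('a \<Rightarrow> real) set"

definition lsub :: "'a lcs_alg \<Rightarrow> 'a \<Rightarrow> 'a \<Rightarrow> 'a" where
  "lsub A x y = ladd A x (lsmult A (-1) y)"

definition lcs_open :: "'a lcs_alg \<Rightarrow> 'a set \<Rightarrow> bool" where
  "lcs_open A U \<longleftrightarrow> U \<subseteq> lcarrier A \<and>
     (\<forall>x\<in>U. \<exists>F e. finite F \<and> F \<subseteq> lsemis A \<and> e > 0 \<and>
        {y \<in> lcarrier A. \<forall>p\<in>F. p (lsub A y x) < e} \<subseteq> U)"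

definition sball :: "'a lcs_alg \<Rightarrow> ('a \<Rightarrow> real) set \<Rightarrow> real \<Rightarrow> 'a \<Rightarrow> 'a set" where
  "sball A F e x = {y \<in> lcarrier A. \<forall>p\<in>F. p (lsub A y x) < e}"
lemma lcs_open_alt: "lcs_open A U \<longleftrightarrow> U \<subseteq> lcarrier A \<and>
     (\<forall>x\<in>U. \<exists>F e. finite F \<and> F \<subseteq> lsemis A \<and> e > 0 \<and> sball A F e x \<subseteq> U)"
  unfolding lcs_open_def sball_def by simp
lemma sball_mono: "F \<subseteq> G \<Longrightarrow> e' \<le> e \<Longrightarrow> sball A G e' x \<subseteq> sball A F e x"
  unfolding sball_def by force
lemma istopology_lcs_open: "istopology (lcs_open A)"
  unfolding istopology_def
proof (intro conjI allI impI)
  fix S T assume S: "lcs_open A S" and T: "lcs_open A T"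
  show "lcs_open A (S \<inter> T)"
    unfolding lcs_open_alt
  proof (intro conjI ballI)
    show "S \<inter> T \<subseteq> lcarrier A" using S unfolding lcs_open_alt by blast
  next
    fix x assume x: "x \<in> S \<inter> T"
    obtain F1 e1 where 1: "finite F1" "F1 \<subseteq> lsemis A" "e1 > 0" "sball A F1 e1 x \<subseteq> S"
      using S x unfolding lcs_open_alt by blast
    obtain F2 e2 where 2: "finite F2" "F2 \<subseteq> lsemis A" "e2 > 0" "sball A F2 e2 x \<subseteq> T"
      using T x unfolding lcs_open_alt by blast
    have "sball A (F1 \<union> F2) (min e1 e2) x \<subseteq> sball A F1 e1 x"
      by (rule sball_mono) auto
    moreover have "sball A (F1 \<union> F2) (min e1 e2) x \<subseteq> sball A F2 e2 x"
      by (rule sball_mono) auto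
    ultimately have "sball A (F1 \<union> F2) (min e1 e2) x \<subseteq> S \<inter> T"
      using 1(4) 2(4) by blast
    moreover have "finite (F1 \<union> F2)" "F1 \<union> F2 \<subseteq> lsemis A" "min e1 e2 > 0"
      using 1 2 by auto
    ultimately show "\<exists>F e. finite F \<and> F \<subseteq> lsemis A \<and> e > 0 \<and> sball A F e x \<subseteq> S \<inter> T"
      by blast
  qed
next
  fix K assume K: "\<forall>S\<in>K. lcs_open A S"
  show "lcs_open A (\<Union>K)"
    unfolding lcs_open_alt
  proof (intro conjI ballI)
    show "\<Union>K \<subseteq> lcarrier A" using K unfolding lcs_open_alt by blast
  next
    fix x assume "x \<in> \<Union>K"
    then obtain S where S: "S \<in> K" "x \<in> S" by blast
    then have "lcs_open A S" using K by blast
    then obtain F e where "finite F" "F \<subseteq> lsemis A" "e > 0" "sball A F e x \<subseteq> S"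
      using S(2) unfolding lcs_open_alt by blast
    moreover have "S \<subseteq> \<Union>K" using S(1) by blast
    ultimately show "\<exists>F e. finite F \<and> F \<subseteq> lsemis A \<and> e > 0 \<and> sball A F e x \<subseteq> \<Union>K"
      by blast
  qed
qed

definition lcs_topology :: "'a lcs_alg \<Rightarrow> 'a topology" where
  "lcs_topology A = topology (lcs_open A)"

definition star_alg :: "'a lcs_alg \<Rightarrow> bool" where
  "star_alg A \<longleftrightarrow>
    lzero A \<in> lcarrier A \<and>
    (\<forall>x\<in>lcarrier A. \<forall>y\<in>lcarrier A. ladd A x y \<in> lcarrier A) \<and>
    (\<forall>x\<in>lcarrier A. \<forall>y\<in>lcarrier A. lmult A x y \<in> lcarrier A) \<and>
    (\<forall>c. \<forall>x\<in>lcarrier A. lsmult A c x \<in> lcarrier A) \<and>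
    (\<forall>x\<in>lcarrier A. lstar A x \<in> lcarrier A) \<and>
    (\<forall>x\<in>lcarrier A. \<forall>y\<in>lcarrier A. \<forall>z\<in>lcarrier A.
        ladd A (ladd A x y) z = ladd A x (ladd A y z)) \<and>
    (\<forall>x\<in>lcarrier A. \<forall>y\<in>lcarrier A. ladd A x y = ladd A y x) \<and>
    (\<forall>x\<in>lcarrier A. ladd A (lzero A) x = x) \<and>
    (\<forall>x\<in>lcarrier A. ladd A x (lsmult A (-1) x) = lzero A) \<and>
    (\<forall>x\<in>lcarrier A. lsmult A 1 x = x) \<and>
    (\<forall>a b. \<forall>x\<in>lcarrier A. lsmult A a (lsmult A b x) = lsmult A (a * b) x) \<and>
    (\<forall>a b. \<forall>x\<in>lcarrier A. lsmult A (a + b) x = ladd A (lsmult A a x) (lsmult A b x)) \<and>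
    (\<forall>a. \<forall>x\<in>lcarrier A. \<forall>y\<in>lcarrier A.
        lsmult A a (ladd A x y) = ladd A (lsmult A a x) (lsmult A a y)) \<and>
    (\<forall>x\<in>lcarrier A. \<forall>y\<in>lcarrier A. \<forall>z\<in>lcarrier A.
        lmult A (lmult A x y) z = lmult A x (lmult A y z)) \<and>
    (\<forall>x\<in>lcarrier A. \<forall>y\<in>lcarrier A. \<forall>z\<in>lcarrier A.
        lmult A (ladd A x y) z = ladd A (lmult A x z) (lmult A y z)) \<and>
    (\<forall>x\<in>lcarrier A. \<forall>y\<in>lcarrier A. \<forall>z\<in>lcarrier A.
        lmult A x (ladd A y z) = ladd A (lmult A x y) (lmult A x z)) \<and>
    (\<forall>c. \<forall>x\<in>lcarrier A. \<forall>y\<in>lcarrier A.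
        lsmult A c (lmult A x y) = lmult A (lsmult A c x) y \<and>
        lsmult A c (lmult A x y) = lmult A x (lsmult A c y)) \<and>
    (\<forall>x\<in>lcarrier A. lstar A (lstar A x) = x) \<and>
    (\<forall>x\<in>lcarrier A. \<forall>y\<in>lcarrier A. lstar A (ladd A x y) = ladd A (lstar A x) (lstar A y)) \<and>
    (\<forall>c. \<forall>x\<in>lcarrier A. lstar A (lsmult A c x) = lsmult A (cnj c) (lstar A x)) \<and>
    (\<forall>x\<in>lcarrier A. \<forall>y\<in>lcarrier A. lstar A (lmult A x y) = lmult A (lstar A y) (lstar A x))"

definition cstar_seminorm :: "'a lcs_alg \<Rightarrow> ('a \<Rightarrow> real) \<Rightarrow> bool" where
  "cstar_seminorm A p \<longleftrightarrow>
    (\<forall>x\<in>lcarrier A. p x \<ge> 0) \<and>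
    (\<forall>x\<in>lcarrier A. \<forall>y\<in>lcarrier A. p (ladd A x y) \<le> p x + p y) \<and>
    (\<forall>c. \<forall>x\<in>lcarrier A. p (lsmult A c x) = cmod c * p x) \<and>
    (\<forall>x\<in>lcarrier A. \<forall>y\<in>lcarrier A. p (lmult A x y) \<le> p x * p y) \<and>
    (\<forall>x\<in>lcarrier A. p (lmult A (lstar A x) x) = (p x)\<^sup>2)"

text \<open>Locally C*-algebra: complete Hausdorff, topology given by the C*-seminorms
  (joint continuity of multiplication follows from submultiplicativity).
  Completeness is expressed with Cauchy filters (equivalent to Cauchy nets).\<close>
definition locally_cstar :: "'a lcs_alg \<Rightarrow> bool" where
  "locally_cstar A \<longleftrightarrow> star_alg A \<and>
    (\<forall>p\<in>lsemis A. cstar_seminorm A p) \<and>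
    (\<forall>x\<in>lcarrier A. (\<forall>p\<in>lsemis A. p x = 0) \<longrightarrow> x = lzero A) \<and>
    (\<forall>F. F \<noteq> bot \<longrightarrow> eventually (\<lambda>x. x \<in> lcarrier A) F \<longrightarrow>
       (\<forall>p\<in>lsemis A. \<forall>e>0. eventually (\<lambda>(x,y). p (lsub A x y) < e) (F \<times>\<^sub>F F)) \<longrightarrow>
       (\<exists>x\<in>lcarrier A. \<forall>p\<in>lsemis A. \<forall>e>0. eventually (\<lambda>y. p (lsub A y x) < e) F))"

definition subspace_l :: "'a lcs_alg \<Rightarrow> 'a set \<Rightarrow> bool" where
  "subspace_l A J \<longleftrightarrow> J \<subseteq> lcarrier A \<and> lzero A \<in> J \<and>
     (\<forall>x\<in>J. \<forall>y\<in>J. ladd A x y \<in> J) \<and> (\<forall>c. \<forall>x\<in>J. lsmult A c x \<in> J)"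

definition closed_left_ideal :: "'a lcs_alg \<Rightarrow> 'a set \<Rightarrow> bool" where
  "closed_left_ideal A J \<longleftrightarrow> subspace_l A J \<and>
     (\<forall>a\<in>lcarrier A. \<forall>x\<in>J. lmult A a x \<in> J) \<and> closedin (lcs_topology A) J"

definition closed_right_ideal :: "'a lcs_alg \<Rightarrow> 'a set \<Rightarrow> bool" where
  "closed_right_ideal A J \<longleftrightarrow> subspace_l A J \<and>
     (\<forall>a\<in>lcarrier A. \<forall>x\<in>J. lmult A x a \<in> J) \<and> closedin (lcs_topology A) J"

definition closed_ideal :: "'a lcs_alg \<Rightarrow> 'a set \<Rightarrow> bool" where
  "closed_ideal A J \<longleftrightarrow> closed_left_ideal A J \<and> closed_right_ideal A J"

definition lan :: "'a lcs_alg \<Rightarrow> 'a set \<Rightarrow> 'a set" where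
  "lan A S = {a \<in> lcarrier A. \<forall>s\<in>S. lmult A a s = lzero A}"

definition ran :: "'a lcs_alg \<Rightarrow> 'a set \<Rightarrow> 'a set" where
  "ran A S = {a \<in> lcarrier A. \<forall>s\<in>S. lmult A s a = lzero A}"

definition annihilator_alg :: "'a lcs_alg \<Rightarrow> bool" where
  "annihilator_alg A \<longleftrightarrow>
    (\<forall>J. closed_left_ideal A J \<longrightarrow> (ran A J = {lzero A} \<longleftrightarrow> J = lcarrier A)) \<and>
    (\<forall>K. closed_right_ideal A K \<longrightarrow> (lan A K = {lzero A} \<longleftrightarrow> K = lcarrier A))"

definition annihilator_locally_cstar :: "'a lcs_alg \<Rightarrow> bool" where
  "annihilator_locally_cstar A \<longleftrightarrow> locally_cstar A \<and> annihilator_alg A"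

definition sub_alg :: "'a lcs_alg \<Rightarrow> 'a set \<Rightarrow> 'a lcs_alg" where
  "sub_alg A I = A\<lparr>lcarrier := I\<rparr>"

definition coset_l :: "'a lcs_alg \<Rightarrow> 'a set \<Rightarrow> 'a \<Rightarrow> 'a set" where
  "coset_l A I x = {ladd A x i | i. i \<in> I}"

definition rep_l :: "'a set \<Rightarrow> 'a" where
  "rep_l X = (SOME x. x \<in> X)"

definition quot_alg :: "'a lcs_alg \<Rightarrow> 'a set \<Rightarrow> 'a set lcs_alg" where
  "quot_alg A I = \<lparr>
     lcarrier = coset_l A I ` lcarrier A,
     lzero = coset_l A I (lzero A),
     ladd = (\<lambda>X Y. coset_l A I (ladd A (rep_l X) (rep_l Y))),
     lsmult = (\<lambda>c X. coset_l A I (lsmult A c (rep_l X))),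
     lmult = (\<lambda>X Y. coset_l A I (lmult A (rep_l X) (rep_l Y))),
     lstar = (\<lambda>X. coset_l A I (lstar A (rep_l X))),
     lsemis = {(\<lambda>X. Inf (p ` X)) | p. p \<in> lsemis A} \<rparr>"

definition prod_alg :: "'a lcs_alg \<Rightarrow> 'b lcs_alg \<Rightarrow> ('a \<times> 'b) lcs_alg" where
  "prod_alg A B = \<lparr>
     lcarrier = lcarrier A \<times> lcarrier B,
     lzero = (lzero A, lzero B),
     ladd = (\<lambda>x y. (ladd A (fst x) (fst y), ladd B (snd x) (snd y))),
     lsmult = (\<lambda>c x. (lsmult A c (fst x), lsmult B c (snd x))),
     lmult = (\<lambda>x y. (lmult A (fst x) (fst y), lmult B (snd x) (snd y))),
     lstar = (\<lambda>x. (lstar A (fst x), lstar B (snd x))),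
     lsemis = {(\<lambda>z. p (fst z)) | p. p \<in> lsemis A} \<union> {(\<lambda>z. q (snd z)) | q. q \<in> lsemis B} \<rparr>"

definition top_star_iso :: "'a lcs_alg \<Rightarrow> 'b lcs_alg \<Rightarrow> ('a \<Rightarrow> 'b) \<Rightarrow> bool" where
  "top_star_iso A B f \<longleftrightarrow>
    bij_betw f (lcarrier A) (lcarrier B) \<and>
    (\<forall>x\<in>lcarrier A. \<forall>y\<in>lcarrier A. f (ladd A x y) = ladd B (f x) (f y)) \<and>
    (\<forall>c. \<forall>x\<in>lcarrier A. f (lsmult A c x) = lsmult B c (f x)) \<and>
    (\<forall>x\<in>lcarrier A. \<forall>y\<in>lcarrier A. f (lmult A x y) = lmult B (f x) (f y)) \<and>
    (\<forall>x\<in>lcarrier A. f (lstar A x) = lstar B (f x)) \<and>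
    homeomorphic_map (lcs_topology A) (lcs_topology B) f"

end

theory Submission
  imports Defs
begin

text \<open>
  For a C*-seminorm p, a closed self-adjoint ideal J and its annihilator K = lan J are
  orthogonal: p(j) \<le> p(j + k), because j* k = 0 and the C*-identity give
  p(j)^2 = p(j* (j + k)) \<le> p(j) p(j + k).
  Using completeness, this makes J + K closed; it is an ideal with zero right annihilator, so in an
  annihilator algebra A = J \<oplus> K. Applied to J = I \<inter> I* this shows that every closed ideal I is
  self-adjoint, so A = I \<oplus> K with I K = K I = 0.

  Then everything is read off from this orthogonal decomposition. A closed left ideal J of I with
  zero right annihilator in I gives the closed left ideal J \<oplus> K of A with zero right annihilator,
  so J \<oplus> K = A and J = I; right ideals are handled in the opposite algebra. The quotient seminorm
  of x + I is p of the K-component of x, so A/I is isometrically *-isomorphic to the annihilator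
  locally C*-algebra K. Finally, writing x = x_I + x_K, the map x \<mapsto> (x_I, x + I) is a
  *-isomorphism A \<rightarrow> I \<times> A/I, and a homeomorphism because p(x_I), p(x_K) \<le> p(x) \<le> p(x_I) + p(x_K).
\<close>

section \<open>Star algebras\<close>

locale star_algebra =
  fixes A :: "'a lcs_alg"
  assumes star_alg: "star_alg A"
begin

abbreviation "carr \<equiv> lcarrier A"
abbreviation "zero \<equiv> lzero A"
abbreviation "add \<equiv> ladd A"
abbreviation "mul \<equiv> lmult A"
abbreviation "smul \<equiv> lsmult A"
abbreviation "star \<equiv> lstar A"
abbreviation "sub \<equiv> lsub A"
abbreviation "neg x \<equiv> lsmult A (-1) x"

lemma
  shows zero_closed [simp]: "zero \<in> carr"
    and add_closed [simp]: "\<And>x y. x \<in> carr \<Longrightarrow> y \<in> carr \<Longrightarrow> add x y \<in> carr"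
    and mul_closed [simp]: "\<And>x y. x \<in> carr \<Longrightarrow> y \<in> carr \<Longrightarrow> mul x y \<in> carr"
    and smul_closed [simp]: "\<And>c x. x \<in> carr \<Longrightarrow> smul c x \<in> carr"
    and star_closed [simp]: "\<And>x. x \<in> carr \<Longrightarrow> star x \<in> carr"
    and add_assoc: "\<And>x y w. x \<in> carr \<Longrightarrow> y \<in> carr \<Longrightarrow> w \<in> carr \<Longrightarrow> add (add x y) w = add x (add y w)"
    and add_commute: "\<And>x y. x \<in> carr \<Longrightarrow> y \<in> carr \<Longrightarrow> add x y = add y x"
    and add_zero_left [simp]: "\<And>x. x \<in> carr \<Longrightarrow> add zero x = x"
    and add_neg: "\<And>x. x \<in> carr \<Longrightarrow> add x (neg x) = zero"
    and smul_one [simp]: "\<And>x. x \<in> carr \<Longrightarrow> smul 1 x = x"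
    and smul_smul [simp]: "\<And>a b x. x \<in> carr \<Longrightarrow> smul a (smul b x) = smul (a * b) x"
    and smul_add_scalar: "\<And>a b x. x \<in> carr \<Longrightarrow> smul (a + b) x = add (smul a x) (smul b x)"
    and smul_add: "\<And>a x y. x \<in> carr \<Longrightarrow> y \<in> carr \<Longrightarrow> smul a (add x y) = add (smul a x) (smul a y)"
    and mul_assoc: "\<And>x y w. x \<in> carr \<Longrightarrow> y \<in> carr \<Longrightarrow> w \<in> carr \<Longrightarrow> mul (mul x y) w = mul x (mul y w)"
    and mul_add_left: "\<And>x y w. x \<in> carr \<Longrightarrow> y \<in> carr \<Longrightarrow> w \<in> carr \<Longrightarrow> mul (add x y) w = add (mul x w) (mul y w)"
    and mul_add_right: "\<And>x y w. x \<in> carr \<Longrightarrow> y \<in> carr \<Longrightarrow> w \<in> carr \<Longrightarrow> mul w (add x y) = add (mul w x) (mul w y)"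
    and smul_mul_eq_mul_smul_left: "\<And>c x y. x \<in> carr \<Longrightarrow> y \<in> carr \<Longrightarrow> smul c (mul x y) = mul (smul c x) y"
    and smul_mul_eq_mul_smul_right: "\<And>c x y. x \<in> carr \<Longrightarrow> y \<in> carr \<Longrightarrow> smul c (mul x y) = mul x (smul c y)"
    and star_star [simp]: "\<And>x. x \<in> carr \<Longrightarrow> star (star x) = x"
    and star_add: "\<And>x y. x \<in> carr \<Longrightarrow> y \<in> carr \<Longrightarrow> star (add x y) = add (star x) (star y)"
    and star_smul: "\<And>c x. x \<in> carr \<Longrightarrow> star (smul c x) = smul (cnj c) (star x)"
    and star_mul: "\<And>x y. x \<in> carr \<Longrightarrow> y \<in> carr \<Longrightarrow> star (mul x y) = mul (star y) (star x)"
  by (insert star_alg, unfold star_alg_def, (elim conjE, (simp; fail | metis))+)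

lemmas mul_smul_left = smul_mul_eq_mul_smul_left[symmetric]
lemmas mul_smul_right = smul_mul_eq_mul_smul_right[symmetric]

lemma add_zero_right [simp]: "x \<in> carr \<Longrightarrow> add x zero = x"
  using add_commute[of x zero] by simp

lemma neg_add: "x \<in> carr \<Longrightarrow> add (neg x) x = zero"
  using add_neg[of x] add_commute[of "neg x" x] by simp

lemma add_left_cancel:
  assumes "x \<in> carr" "y \<in> carr" "w \<in> carr" "add x y = add x w"
  shows "y = w"
proof -
  have "y = add (add (neg x) x) y" using assms by (simp add: neg_add)
  also have "\<dots> = add (neg x) (add x w)" using assms by (simp add: add_assoc)
  also have "\<dots> = w" using assms by (simp flip: add_assoc add: neg_add)
  finally show ?thesis .
qed

lemma smul_zero_scalar [simp]:
  assumes "x \<in> carr" shows "smul 0 x = zero"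
proof -
  have "add (smul 0 x) (smul 0 x) = add (smul 0 x) zero"
    using smul_add_scalar[OF assms, of 0 0] assms by simp
  then show ?thesis by (metis add_left_cancel assms smul_closed zero_closed)
qed

lemma smul_zero [simp]: "smul c zero = zero"
  using smul_smul[OF zero_closed, of c 0] by simp

lemma mul_zero_right [simp]: "x \<in> carr \<Longrightarrow> mul x zero = zero"
  using mul_smul_right[of x zero 0] by simp

lemma mul_zero_left [simp]: "x \<in> carr \<Longrightarrow> mul zero x = zero"
  using mul_smul_left[of zero x 0] by simp

lemma star_zero [simp]: "star zero = zero"
  using star_smul[OF zero_closed, of 0] by simp

lemma sub_closed [simp]: "x \<in> carr \<Longrightarrow> y \<in> carr \<Longrightarrow> sub x y \<in> carr"
  by (simp add: lsub_def)

lemma sub_self [simp]: "x \<in> carr \<Longrightarrow> sub x x = zero"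
  by (simp add: lsub_def add_neg)

lemma sub_zero_right [simp]: "x \<in> carr \<Longrightarrow> sub x zero = x"
  by (simp add: lsub_def)

lemma sub_add_cancel: "x \<in> carr \<Longrightarrow> y \<in> carr \<Longrightarrow> add (sub x y) y = x"
  by (simp add: lsub_def add_assoc neg_add)

lemma add_sub_cancel: "x \<in> carr \<Longrightarrow> y \<in> carr \<Longrightarrow> add y (sub x y) = x"
  by (metis sub_add_cancel add_commute sub_closed)

lemma sub_eq_iff_add_eq:
  assumes "x \<in> carr" "y \<in> carr" "w \<in> carr"
  shows "y = sub w x \<longleftrightarrow> add x y = w"
  using assms by (metis add_sub_cancel add_left_cancel sub_closed)

lemma sub_add_left: "x \<in> carr \<Longrightarrow> y \<in> carr \<Longrightarrow> sub (add x y) x = y"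
  using sub_eq_iff_add_eq[of x y "add x y"] by simp

lemma sub_add_right: "x \<in> carr \<Longrightarrow> y \<in> carr \<Longrightarrow> sub (add x y) y = x"
  using sub_add_left[of y x] add_commute[of x y] by simp

lemma sub_eq_zero_iff:
  assumes "x \<in> carr" "y \<in> carr"
  shows "sub x y = zero \<longleftrightarrow> x = y"
proof
  assume "sub x y = zero"
  then show "x = y" using sub_eq_iff_add_eq[OF assms(2) zero_closed assms(1)] assms(2) by simp
qed (use assms in simp)

lemma add_add_swap:
  assumes "a \<in> carr" "b \<in> carr" "c \<in> carr" "d \<in> carr"
  shows "add (add a b) (add c d) = add (add a c) (add b d)"
proof -
  have "add (add a b) (add c d) = add a (add (add b c) d)" using assms by (simp add: add_assoc)
  also have "\<dots> = add a (add (add c b) d)" using assms add_commute[of b c] by simp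
  also have "\<dots> = add (add a c) (add b d)" using assms by (simp add: add_assoc)
  finally show ?thesis .
qed

lemma sub_add_add:
  assumes "a \<in> carr" "b \<in> carr" "c \<in> carr" "d \<in> carr"
  shows "sub (add a b) (add c d) = add (sub a c) (sub b d)"
  using assms add_add_swap[of a b "neg c" "neg d"] by (simp add: lsub_def smul_add)

lemma neg_sub: "x \<in> carr \<Longrightarrow> y \<in> carr \<Longrightarrow> neg (sub x y) = sub y x"
  by (simp add: lsub_def smul_add add_commute)

lemma sub_add_sub:
  assumes "x \<in> carr" "y \<in> carr" "w \<in> carr"
  shows "add (sub x y) (sub y w) = sub x w"
proof -
  have "add (sub x y) (sub y w) = add x (add (add (neg y) y) (neg w))"
    using assms by (simp add: lsub_def add_assoc)
  then show ?thesis using assms by (simp add: neg_add lsub_def)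
qed

lemma mul_sub_left: "x \<in> carr \<Longrightarrow> y \<in> carr \<Longrightarrow> w \<in> carr \<Longrightarrow> mul (sub x y) w = sub (mul x w) (mul y w)"
  by (simp add: lsub_def mul_add_left mul_smul_left)

lemma mul_sub_right: "x \<in> carr \<Longrightarrow> y \<in> carr \<Longrightarrow> w \<in> carr \<Longrightarrow> mul w (sub x y) = sub (mul w x) (mul w y)"
  by (simp add: lsub_def mul_add_right mul_smul_right)

lemma star_sub: "x \<in> carr \<Longrightarrow> y \<in> carr \<Longrightarrow> star (sub x y) = sub (star x) (star y)"
  by (simp add: lsub_def star_add star_smul)

lemma smul_sub: "x \<in> carr \<Longrightarrow> y \<in> carr \<Longrightarrow> smul c (sub x y) = sub (smul c x) (smul c y)"
  by (simp add: lsub_def smul_add mult.commute)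

end

definition two_sided_ideal :: "'a lcs_alg \<Rightarrow> 'a set \<Rightarrow> bool" where
  "two_sided_ideal A J \<longleftrightarrow> subspace_l A J \<and>
     (\<forall>a\<in>lcarrier A. \<forall>x\<in>J. lmult A a x \<in> J \<and> lmult A x a \<in> J)"

lemma closed_ideal_iff: "closed_ideal A J \<longleftrightarrow> two_sided_ideal A J \<and> closedin (lcs_topology A) J"
  unfolding closed_ideal_def closed_left_ideal_def closed_right_ideal_def two_sided_ideal_def
  by blast

lemma closed_left_ideal_if_ideal:
  "two_sided_ideal A J \<Longrightarrow> closedin (lcs_topology A) J \<Longrightarrow> closed_left_ideal A J"
  unfolding two_sided_ideal_def closed_left_ideal_def by blast

definition sumset :: "'a lcs_alg \<Rightarrow> 'a set \<Rightarrow> 'a set \<Rightarrow> 'a set" where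
  "sumset A J K = {ladd A j k | j k. j \<in> J \<and> k \<in> K}"

context star_algebra
begin

lemma subspace_subset: "subspace_l A J \<Longrightarrow> J \<subseteq> carr"
  unfolding subspace_l_def by blast

lemma subspace_sub: "subspace_l A J \<Longrightarrow> x \<in> J \<Longrightarrow> y \<in> J \<Longrightarrow> sub x y \<in> J"
  unfolding subspace_l_def lsub_def by blast

lemma subspace_sumset:
  assumes J: "subspace_l A J" and K: "subspace_l A K"
  shows "subspace_l A (sumset A J K)"
  unfolding subspace_l_def
proof (intro conjI ballI allI)
  have JK: "J \<subseteq> carr" "K \<subseteq> carr" using J K by (auto dest: subspace_subset)
  then show "sumset A J K \<subseteq> carr" unfolding sumset_def by (auto intro!: add_closed)
  have "zero \<in> J" "zero \<in> K" using J K unfolding subspace_l_def by auto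
  then show "zero \<in> sumset A J K" unfolding sumset_def by (intro CollectI exI[of _ zero]) simp
  fix x assume "x \<in> sumset A J K"
  then obtain j k where x: "x = add j k" "j \<in> J" "k \<in> K" unfolding sumset_def by blast
  have jk: "j \<in> carr" "k \<in> carr" using x(2,3) JK by auto
  { fix y assume "y \<in> sumset A J K"
    then obtain j' k' where y: "y = add j' k'" "j' \<in> J" "k' \<in> K" unfolding sumset_def by blast
    have "add x y = add (add j j') (add k k')" using x y JK by (auto intro: add_add_swap)
    moreover have "add j j' \<in> J" "add k k' \<in> K" using J K x y unfolding subspace_l_def by auto
    ultimately show "add x y \<in> sumset A J K" unfolding sumset_def by blast }
  fix c
  have "smul c x = add (smul c j) (smul c k)" using x(1) jk by (simp add: smul_add)
  moreover have "smul c j \<in> J" "smul c k \<in> K" using J K x unfolding subspace_l_def by auto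
  ultimately show "smul c x \<in> sumset A J K" unfolding sumset_def by blast
qed

lemma sumset_commute: "J \<subseteq> carr \<Longrightarrow> K \<subseteq> carr \<Longrightarrow> sumset A J K = sumset A K J"
  unfolding sumset_def by (auto; metis add_commute subsetD)

lemma
  assumes "two_sided_ideal A J"
  shows ideal_subspace: "subspace_l A J"
    and ideal_subset: "J \<subseteq> carr"
    and ideal_zero: "zero \<in> J"
    and ideal_add: "\<And>x y. x \<in> J \<Longrightarrow> y \<in> J \<Longrightarrow> add x y \<in> J"
    and ideal_smul: "\<And>c x. x \<in> J \<Longrightarrow> smul c x \<in> J"
    and ideal_sub: "\<And>x y. x \<in> J \<Longrightarrow> y \<in> J \<Longrightarrow> sub x y \<in> J"
    and ideal_mul_left: "\<And>a x. a \<in> carr \<Longrightarrow> x \<in> J \<Longrightarrow> mul a x \<in> J"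
    and ideal_mul_right: "\<And>a x. a \<in> carr \<Longrightarrow> x \<in> J \<Longrightarrow> mul x a \<in> J"
  using assms subspace_sub unfolding two_sided_ideal_def subspace_l_def by blast+

lemma zero_mem_ran: "S \<subseteq> carr \<Longrightarrow> zero \<in> ran A S"
  unfolding ran_def by (simp add: subset_iff)

lemma ideal_Int:
  assumes "two_sided_ideal A J" "two_sided_ideal A K"
  shows "two_sided_ideal A (J \<inter> K)"
  using assms unfolding two_sided_ideal_def subspace_l_def by blast

lemma ideal_star_image:
  assumes I: "two_sided_ideal A I"
  shows "two_sided_ideal A (star ` I)"
  unfolding two_sided_ideal_def subspace_l_def
proof (intro conjI ballI allI)
  note IC = ideal_subset[OF I]
  show "star ` I \<subseteq> carr" using IC by auto
  show "zero \<in> star ` I" using ideal_zero[OF I] by (intro rev_image_eqI[of zero]) simp_all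
  fix x assume "x \<in> star ` I"
  then obtain i where i: "i \<in> I" "x = star i" by blast
  have iC: "i \<in> carr" using i(1) IC by blast
  { fix y assume "y \<in> star ` I"
    then obtain i' where i': "i' \<in> I" "y = star i'" by blast
    have "i' \<in> carr" using i'(1) IC by blast
    then have "add x y = star (add i i')" using i i' iC by (simp add: star_add)
    then show "add x y \<in> star ` I" using ideal_add[OF I i(1) i'(1)] by blast }
  { fix c have "smul c x = star (smul (cnj c) i)" using i iC by (simp add: star_smul)
    then show "smul c x \<in> star ` I" using ideal_smul[OF I i(1)] by blast }
  fix a assume a: "a \<in> carr"
  have "mul a x = star (mul i (star a))" "mul x a = star (mul (star a) i)"
    using a i iC by (simp_all add: star_mul)
  then show "mul a x \<in> star ` I" "mul x a \<in> star ` I"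
    using ideal_mul_left[OF I _ i(1)] ideal_mul_right[OF I _ i(1)] a by auto
qed

lemma ideal_sumset:
  assumes J: "two_sided_ideal A J" and K: "two_sided_ideal A K"
  shows "two_sided_ideal A (sumset A J K)"
  unfolding two_sided_ideal_def
proof (intro conjI ballI)
  show "subspace_l A (sumset A J K)" using subspace_sumset[OF ideal_subspace[OF J] ideal_subspace[OF K]] .
  fix a x assume a: "a \<in> carr" and "x \<in> sumset A J K"
  then obtain j k where x: "x = add j k" "j \<in> J" "k \<in> K" unfolding sumset_def by blast
  have jk: "j \<in> carr" "k \<in> carr" using x(2,3) ideal_subset[OF J] ideal_subset[OF K] by blast+
  have "mul a x = add (mul a j) (mul a k)" "mul x a = add (mul j a) (mul k a)"
    using x(1) a jk by (simp_all add: mul_add_left mul_add_right)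
  then show "mul a x \<in> sumset A J K" "mul x a \<in> sumset A J K" unfolding sumset_def
    using ideal_mul_left[OF J a x(2)] ideal_mul_left[OF K a x(3)]
      ideal_mul_right[OF J a x(2)] ideal_mul_right[OF K a x(3)] by blast+
qed

end

section \<open>The topology of a family of seminorms\<close>

lemma openin_lcs_topology: "openin (lcs_topology B) = lcs_open B"
  unfolding lcs_topology_def by (rule topology_inverse'[OF istopology_lcs_open])

lemma topspace_lcs_topology [simp]: "topspace (lcs_topology B) = lcarrier B"
proof -
  have "lcs_open B (lcarrier B)"
    unfolding lcs_open_def by (intro conjI ballI exI[of _ "{}"] exI[of _ 1]) auto
  moreover have "\<And>U. lcs_open B U \<Longrightarrow> U \<subseteq> lcarrier B" unfolding lcs_open_def by blast
  ultimately show ?thesis unfolding topspace_def openin_lcs_topology by blast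
qed

definition adherent :: "'a lcs_alg \<Rightarrow> 'a set \<Rightarrow> 'a \<Rightarrow> bool" where
  "adherent B J x \<longleftrightarrow> (\<forall>F e. finite F \<longrightarrow> F \<subseteq> lsemis B \<longrightarrow> e > 0 \<longrightarrow>
      (\<exists>j\<in>J. \<forall>p\<in>F. p (lsub B j x) < e))"

lemma adherent_mono: "adherent B J x \<Longrightarrow> J \<subseteq> J' \<Longrightarrow> adherent B J' x"
  unfolding adherent_def by blast

lemma closedin_lcs_topology:
  "closedin (lcs_topology B) J \<longleftrightarrow> J \<subseteq> lcarrier B \<and> (\<forall>x\<in>lcarrier B. adherent B J x \<longrightarrow> x \<in> J)"
proof -
  have "lcs_open B (lcarrier B - J) \<longleftrightarrow> (\<forall>x\<in>lcarrier B. adherent B J x \<longrightarrow> x \<in> J)"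
    if J: "J \<subseteq> lcarrier B"
  proof (rule iffI)
    assume o: "lcs_open B (lcarrier B - J)"
    show "\<forall>x\<in>lcarrier B. adherent B J x \<longrightarrow> x \<in> J"
    proof (intro ballI impI, rule ccontr)
      fix x assume x: "x \<in> lcarrier B" "adherent B J x" "x \<notin> J"
      then obtain F e where F: "finite F" "F \<subseteq> lsemis B" "e > 0"
        "{y \<in> lcarrier B. \<forall>p\<in>F. p (lsub B y x) < e} \<subseteq> lcarrier B - J"
        using o unfolding lcs_open_def by blast
      obtain j where "j \<in> J" "\<forall>p\<in>F. p (lsub B j x) < e"
        using x(2) F(1-3) unfolding adherent_def by blast
      then show False using F(4) J by blast
    qed
  next
    assume h: "\<forall>x\<in>lcarrier B. adherent B J x \<longrightarrow> x \<in> J"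
    show "lcs_open B (lcarrier B - J)" unfolding lcs_open_def
    proof (intro conjI ballI)
      fix x assume "x \<in> lcarrier B - J"
      then have "\<not> adherent B J x" using h by blast
      then obtain F e where "finite F" "F \<subseteq> lsemis B" "e > 0" "\<not> (\<exists>j\<in>J. \<forall>p\<in>F. p (lsub B j x) < e)"
        unfolding adherent_def by blast
      then show "\<exists>F e. finite F \<and> F \<subseteq> lsemis B \<and> 0 < e \<and>
          {y \<in> lcarrier B. \<forall>p\<in>F. p (lsub B y x) < e} \<subseteq> lcarrier B - J"
        by blast
    qed blast
  qed
  then show ?thesis unfolding closedin_def openin_lcs_topology by auto
qed

lemma closedin_lcs_topology_limit:
  assumes "closedin (lcs_topology B) J" "F \<noteq> bot" "eventually (\<lambda>y. y \<in> J) F"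
    and "x \<in> lcarrier B" "\<forall>p\<in>lsemis B. \<forall>e>0. eventually (\<lambda>y. p (lsub B y x) < e) F"
  shows "x \<in> J"
proof -
  have "adherent B J x" unfolding adherent_def
  proof (intro allI impI)
    fix G :: "('a \<Rightarrow> real) set" and e :: real
    assume G: "finite G" "G \<subseteq> lsemis B" "e > 0"
    have "eventually (\<lambda>y. \<forall>p\<in>G. p (lsub B y x) < e) F"
      using G assms(5) by (intro eventually_ball_finite) auto
    then have "eventually (\<lambda>y. y \<in> J \<and> (\<forall>p\<in>G. p (lsub B y x) < e)) F"
      using assms(3) by (auto intro: eventually_conj)
    from eventually_happens'[OF assms(2) this] show "\<exists>j\<in>J. \<forall>p\<in>G. p (lsub B j x) < e" by blast
  qed
  then show ?thesis using assms(1,4) unfolding closedin_lcs_topology by blast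
qed

lemma uniform_bound_from_seminorm_bounds:
  fixes a :: "'p \<Rightarrow> 'w \<Rightarrow> real" and b :: "'q \<Rightarrow> 'w \<Rightarrow> real"
  assumes "finite F" "e > 0"
    and "\<And>p. p \<in> F \<Longrightarrow> \<exists>c G. c \<ge> 0 \<and> finite G \<and> G \<subseteq> Q \<and> (\<forall>w\<in>W. a p w \<le> c * (\<Sum>q\<in>G. b q w))"
  shows "\<exists>G d. finite G \<and> G \<subseteq> Q \<and> d > 0 \<and> (\<forall>w\<in>W. (\<forall>q\<in>G. b q w < d) \<longrightarrow> (\<forall>p\<in>F. a p w < e))"
proof -
  have "\<forall>p\<in>F. \<exists>c G. c \<ge> 0 \<and> finite G \<and> G \<subseteq> Q \<and> (\<forall>w\<in>W. a p w \<le> c * (\<Sum>q\<in>G. b q w))"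
    using assms(3) by blast
  then obtain c G where cG: "\<And>p. p \<in> F \<Longrightarrow> c p \<ge> 0 \<and> finite (G p) \<and> G p \<subseteq> Q \<and>
      (\<forall>w\<in>W. a p w \<le> c p * (\<Sum>q\<in>G p. b q w))"
    unfolding bchoice_iff by blast
  define G' where "G' = \<Union> (G ` F)"
  define M where "M = (\<Sum>p\<in>F. c p) * real (card G')"
  define d where "d = e / (M + 1)"
  have G': "finite G'" "G' \<subseteq> Q" unfolding G'_def using assms(1) cG by auto
  have M: "M \<ge> 0" unfolding M_def using cG by (simp add: sum_nonneg)
  have d: "d > 0" unfolding d_def using assms(2) M by simp
  have "a p w < e" if w: "w \<in> W" and small: "\<forall>q\<in>G'. b q w < d" and p: "p \<in> F" for w p
  proof -
    have sub: "G p \<subseteq> G'" unfolding G'_def using p by blast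
    have "(\<Sum>q\<in>G p. b q w) \<le> real (card (G p)) * d"
      by (rule sum_bounded_above) (use small sub in \<open>auto intro: less_imp_le\<close>)
    also have "\<dots> \<le> real (card G') * d"
      using card_mono[OF G'(1) sub] d by (simp add: mult_right_mono)
    finally have "a p w \<le> c p * (real (card G') * d)"
      using cG[OF p] w by (meson mult_left_mono order_trans)
    also have "\<dots> \<le> M * d"
    proof -
      have "c p \<le> (\<Sum>p\<in>F. c p)" using cG p assms(1) by (intro member_le_sum) auto
      then show ?thesis unfolding M_def using d by (simp add: mult_right_mono mult.assoc)
    qed
    also have "\<dots> < e" unfolding d_def using assms(2) M by (simp add: field_simps)
    finally show ?thesis .
  qed
  then show ?thesis using G' d by blast
qed

lemma continuous_map_lcs_topology:
  assumes maps: "f ` lcarrier B \<subseteq> lcarrier C"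
    and bound: "\<And>q. q \<in> lsemis C \<Longrightarrow> \<exists>c F. c \<ge> 0 \<and> finite F \<and> F \<subseteq> lsemis B \<and>
        (\<forall>x\<in>lcarrier B. \<forall>y\<in>lcarrier B. q (lsub C (f y) (f x)) \<le> c * (\<Sum>p\<in>F. p (lsub B y x)))"
  shows "continuous_map (lcs_topology B) (lcs_topology C) f"
  unfolding continuous_map topspace_lcs_topology openin_lcs_topology
proof (intro conjI allI impI maps)
  fix U assume U: "lcs_open C U"
  show "lcs_open B {x \<in> lcarrier B. f x \<in> U}" unfolding lcs_open_def
  proof (intro conjI ballI)
    fix x assume x: "x \<in> {x \<in> lcarrier B. f x \<in> U}"
    then obtain F e where F: "finite F" "F \<subseteq> lsemis C" "e > 0"
      "{y \<in> lcarrier C. \<forall>q\<in>F. q (lsub C y (f x)) < e} \<subseteq> U"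
      using U unfolding lcs_open_def by blast
    have "\<exists>c G. c \<ge> 0 \<and> finite G \<and> G \<subseteq> lsemis B \<and>
        (\<forall>y\<in>lcarrier B. q (lsub C (f y) (f x)) \<le> c * (\<Sum>p\<in>G. p (lsub B y x)))" if "q \<in> F" for q
      using bound[of q] that F(2) x by blast
    from uniform_bound_from_seminorm_bounds[where W = "lcarrier B" and Q = "lsemis B"
        and a = "\<lambda>q y. q (lsub C (f y) (f x))" and b = "\<lambda>p y. p (lsub B y x)", OF F(1,3) this]
    obtain G d where G: "finite G" "G \<subseteq> lsemis B" "d > 0"
      "\<forall>y\<in>lcarrier B. (\<forall>p\<in>G. p (lsub B y x) < d) \<longrightarrow> (\<forall>q\<in>F. q (lsub C (f y) (f x)) < e)"
      by blast
    have "{y \<in> lcarrier B. \<forall>p\<in>G. p (lsub B y x) < d} \<subseteq> {x \<in> lcarrier B. f x \<in> U}"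
      using G(4) F(4) maps by blast
    then show "\<exists>F e. finite F \<and> F \<subseteq> lsemis B \<and> 0 < e \<and>
        {y \<in> lcarrier B. \<forall>p\<in>F. p (lsub B y x) < e} \<subseteq> {x \<in> lcarrier B. f x \<in> U}"
      using G(1-3) by blast
  qed blast
qed

lemma homeomorphic_map_lcs_topology:
  assumes bij: "bij_betw f (lcarrier B) (lcarrier C)"
    and bound: "\<And>q. q \<in> lsemis C \<Longrightarrow> \<exists>c F. c \<ge> 0 \<and> finite F \<and> F \<subseteq> lsemis B \<and>
        (\<forall>x\<in>lcarrier B. \<forall>y\<in>lcarrier B. q (lsub C (f y) (f x)) \<le> c * (\<Sum>p\<in>F. p (lsub B y x)))"
    and bound_inv: "\<And>p. p \<in> lsemis B \<Longrightarrow> \<exists>c G. c \<ge> 0 \<and> finite G \<and> G \<subseteq> lsemis C \<and>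
        (\<forall>x\<in>lcarrier B. \<forall>y\<in>lcarrier B. p (lsub B y x) \<le> c * (\<Sum>q\<in>G. q (lsub C (f y) (f x))))"
  shows "homeomorphic_map (lcs_topology B) (lcs_topology C) f"
proof -
  define g where "g = inv_into (lcarrier B) f"
  have img: "f ` lcarrier B = lcarrier C" and inj: "inj_on f (lcarrier B)"
    using bij unfolding bij_betw_def by auto
  have g_maps: "g ` lcarrier C \<subseteq> lcarrier B"
    unfolding g_def using img inv_into_into[of _ f "lcarrier B"] by blast
  have g_f: "g (f x) = x" if "x \<in> lcarrier B" for x
    unfolding g_def using inj that by (rule inv_into_f_f)
  have f_g: "f (g y) = y" if "y \<in> lcarrier C" for y
    unfolding g_def by (rule f_inv_into_f) (use that img in simp)
  note g = g_maps g_f f_g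
  have "continuous_map (lcs_topology C) (lcs_topology B) g"
  proof (rule continuous_map_lcs_topology[OF g(1)])
    fix p assume p: "p \<in> lsemis B"
    obtain c G where cG: "c \<ge> 0" "finite G" "G \<subseteq> lsemis C"
      "\<forall>x\<in>lcarrier B. \<forall>y\<in>lcarrier B. p (lsub B y x) \<le> c * (\<Sum>q\<in>G. q (lsub C (f y) (f x)))"
      using bound_inv[OF p] by blast
    have "p (lsub B (g y) (g x)) \<le> c * (\<Sum>q\<in>G. q (lsub C y x))"
      if "x \<in> lcarrier C" "y \<in> lcarrier C" for x y
    proof -
      have "g x \<in> lcarrier B" "g y \<in> lcarrier B" using g_maps that by blast+
      from cG(4)[rule_format, OF this] show ?thesis using f_g[OF that(1)] f_g[OF that(2)] by simp
    qed
    then show "\<exists>c F. c \<ge> 0 \<and> finite F \<and> F \<subseteq> lsemis C \<and>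
        (\<forall>x\<in>lcarrier C. \<forall>y\<in>lcarrier C. p (lsub B (g y) (g x)) \<le> c * (\<Sum>q\<in>F. q (lsub C y x)))"
      using cG(1-3) by blast
  qed
  moreover have "continuous_map (lcs_topology B) (lcs_topology C) f"
    using img bound by (intro continuous_map_lcs_topology) auto
  ultimately have "homeomorphic_maps (lcs_topology B) (lcs_topology C) f g"
    unfolding homeomorphic_maps_def using g by simp
  then show ?thesis by (rule homeomorphic_maps_imp_map)
qed

lemma add_le_double_sum_pair:
  fixes f :: "'b \<Rightarrow> real"
  assumes "f a \<ge> 0" "f b \<ge> 0"
  shows "f a + f b \<le> 2 * (\<Sum>x\<in>{a, b}. f x)"
  using assms by (cases "a = b") simp_all

section \<open>Locally C*-algebras\<close>

locale locally_cstar_algebra =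
  fixes A :: "'a lcs_alg"
  assumes locally_cstar: "locally_cstar A"

sublocale locally_cstar_algebra \<subseteq> star_algebra
  using locally_cstar unfolding locally_cstar_def star_algebra_def by blast

context locally_cstar_algebra
begin

abbreviation "semis \<equiv> lsemis A"

lemma cstar_seminorm: "p \<in> semis \<Longrightarrow> cstar_seminorm A p"
  using locally_cstar unfolding locally_cstar_def by blast

lemma separating: "x \<in> carr \<Longrightarrow> (\<And>p. p \<in> semis \<Longrightarrow> p x = 0) \<Longrightarrow> x = zero"
  using locally_cstar unfolding locally_cstar_def by blast

lemma complete:
  "F \<noteq> bot \<Longrightarrow> eventually (\<lambda>x. x \<in> carr) F \<Longrightarrow>
   (\<forall>p\<in>semis. \<forall>e>0. eventually (\<lambda>(x, y). p (sub x y) < e) (F \<times>\<^sub>F F)) \<Longrightarrow>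
   \<exists>x\<in>carr. \<forall>p\<in>semis. \<forall>e>0. eventually (\<lambda>y. p (sub y x) < e) F"
  using locally_cstar unfolding locally_cstar_def by blast

lemma
  assumes "p \<in> semis"
  shows seminorm_nonneg: "\<And>x. x \<in> carr \<Longrightarrow> p x \<ge> 0"
    and seminorm_add: "\<And>x y. x \<in> carr \<Longrightarrow> y \<in> carr \<Longrightarrow> p (add x y) \<le> p x + p y"
    and seminorm_smul: "\<And>c x. x \<in> carr \<Longrightarrow> p (smul c x) = cmod c * p x"
    and seminorm_mul: "\<And>x y. x \<in> carr \<Longrightarrow> y \<in> carr \<Longrightarrow> p (mul x y) \<le> p x * p y"
    and seminorm_cstar: "\<And>x. x \<in> carr \<Longrightarrow> p (mul (star x) x) = (p x)\<^sup>2"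
  using cstar_seminorm[OF assms] unfolding cstar_seminorm_def by blast+

lemma seminorm_zero [simp]: "p \<in> semis \<Longrightarrow> p zero = 0"
  using seminorm_smul[of p zero 0] by simp

lemma seminorm_neg: "p \<in> semis \<Longrightarrow> x \<in> carr \<Longrightarrow> p (neg x) = p x"
  using seminorm_smul[of p x "-1"] by simp

lemma seminorm_sub_commute: "p \<in> semis \<Longrightarrow> x \<in> carr \<Longrightarrow> y \<in> carr \<Longrightarrow> p (sub x y) = p (sub y x)"
  using seminorm_neg[of p "sub x y"] neg_sub[of x y] by simp

lemma seminorm_sub_le: "p \<in> semis \<Longrightarrow> x \<in> carr \<Longrightarrow> y \<in> carr \<Longrightarrow> p (sub x y) \<le> p x + p y"
  using seminorm_add[of p x "neg y"] seminorm_neg[of p y] unfolding lsub_def by simp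

lemma seminorm_sub_triangle:
  "p \<in> semis \<Longrightarrow> x \<in> carr \<Longrightarrow> y \<in> carr \<Longrightarrow> w \<in> carr \<Longrightarrow> p (sub x w) \<le> p (sub x y) + p (sub y w)"
  using sub_add_sub[of x y w] seminorm_add[of p "sub x y" "sub y w"] by simp

lemma seminorm_le_mul_cancel:
  assumes "p \<in> semis" "x \<in> carr" "y \<in> carr" "p x * p x \<le> p x * p y"
  shows "p x \<le> p y"
  using assms seminorm_nonneg[OF assms(1,2)] seminorm_nonneg[OF assms(1,3)]
  by (cases "p x = 0") (auto intro: mult_left_le_imp_le)

lemma seminorm_star [simp]:
  assumes "p \<in> semis" "x \<in> carr"
  shows "p (star x) = p x"
proof -
  have le: "p y \<le> p (star y)" if "y \<in> carr" for y
  proof (rule seminorm_le_mul_cancel[OF assms(1) that star_closed[OF that]])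
    show "p y * p y \<le> p y * p (star y)"
      using seminorm_cstar[OF assms(1) that] seminorm_mul[OF assms(1) star_closed[OF that] that]
      by (simp add: power2_eq_square mult.commute)
  qed
  show ?thesis using le[of x] le[of "star x"] assms by simp
qed

lemma seminorm_cstar_right: "p \<in> semis \<Longrightarrow> x \<in> carr \<Longrightarrow> p (mul x (star x)) = (p x)\<^sup>2"
  using seminorm_cstar[of p "star x"] by simp

lemma eq_zero_if_seminorms_small:
  assumes "x \<in> carr" "\<And>p e. p \<in> semis \<Longrightarrow> e > 0 \<Longrightarrow> p x < e"
  shows "x = zero"
proof (rule separating[OF assms(1)])
  fix p assume p: "p \<in> semis"
  show "p x = 0" using assms(2)[OF p, of "p x"] seminorm_nonneg[OF p assms(1)] by linarith
qed

lemma star_mul_self_eq_zero: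
  assumes "x \<in> carr" "mul (star x) x = zero"
  shows "x = zero"
proof (rule separating[OF assms(1)])
  fix p assume "p \<in> semis"
  then show "p x = 0" using seminorm_cstar[of p x] assms by simp
qed

lemma mul_star_self_eq_zero:
  assumes "x \<in> carr" "mul x (star x) = zero"
  shows "x = zero"
proof -
  have "star x = zero" using star_mul_self_eq_zero[of "star x"] assms by simp
  then have "star (star x) = zero" by simp
  then show ?thesis using assms(1) by simp
qed

lemma closedin_lan:
  assumes "S \<subseteq> carr"
  shows "closedin (lcs_topology A) (lan A S)"
  unfolding closedin_lcs_topology
proof (intro conjI ballI impI)
  show "lan A S \<subseteq> carr" unfolding lan_def by blast
  fix x assume x: "x \<in> carr" and adh: "adherent A (lan A S) x"
  have "mul x s = zero" if s: "s \<in> S" for s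
  proof (rule eq_zero_if_seminorms_small)
    have sC: "s \<in> carr" using s assms by blast
    show "mul x s \<in> carr" using x sC by simp
    fix p e assume p: "p \<in> semis" and e: "(e::real) > 0"
    have ps: "p s \<ge> 0" using seminorm_nonneg[OF p sC] .
    define d where "d = e / (p s + 1)"
    have d: "d > 0" using e ps unfolding d_def by simp
    obtain j where j: "j \<in> lan A S" "p (sub j x) < d"
      using adh p d unfolding adherent_def by (auto dest!: spec[of _ "{p}"] spec[of _ d])
    have jC: "j \<in> carr" and js: "mul j s = zero" using j(1) s unfolding lan_def by auto
    have "mul x s = mul (sub x j) s" using js x jC sC by (simp add: mul_sub_left)
    then have "p (mul x s) \<le> p (sub j x) * p s"
      using seminorm_mul[OF p sub_closed[OF x jC] sC] seminorm_sub_commute[OF p x jC] by simp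
    also have "\<dots> \<le> d * p s" using j(2) ps by (simp add: mult_right_mono)
    also have "\<dots> < e" using e ps unfolding d_def by (simp add: field_simps)
    finally show "p (mul x s) < e" .
  qed
  then show "x \<in> lan A S" unfolding lan_def using x by blast
qed

lemma closedin_star_image:
  assumes I: "closedin (lcs_topology A) I"
  shows "closedin (lcs_topology A) (star ` I)"
  unfolding closedin_lcs_topology
proof (intro conjI ballI impI)
  have IC: "I \<subseteq> carr" using I unfolding closedin_lcs_topology by blast
  then show "star ` I \<subseteq> carr" by auto
  fix x assume x: "x \<in> carr" and adh: "adherent A (star ` I) x"
  have "adherent A I (star x)" unfolding adherent_def
  proof (intro allI impI)
    fix F e assume F: "finite F" "F \<subseteq> semis" "(e::real) > 0"
    then obtain i where i: "i \<in> I" "\<forall>p\<in>F. p (sub (star i) x) < e"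
      using adh unfolding adherent_def by blast
    have iC: "i \<in> carr" using i(1) IC by blast
    have "p (sub i (star x)) < e" if "p \<in> F" for p
    proof -
      have "sub i (star x) = star (sub (star i) x)" using iC x by (simp add: star_sub)
      then show ?thesis using i(2) iC x that F(2) by auto
    qed
    then have "\<forall>p\<in>F. p (sub i (star x)) < e" by blast
    then show "\<exists>j\<in>I. \<forall>p\<in>F. p (sub j (star x)) < e" using i by blast
  qed
  then have "star x \<in> I" using I x unfolding closedin_lcs_topology by simp
  then show "x \<in> star ` I" using x by (metis image_eqI star_star)
qed

lemma ideal_lan:
  assumes J: "two_sided_ideal A J"
  shows "two_sided_ideal A (lan A J)"
  unfolding two_sided_ideal_def subspace_l_def
proof (intro conjI ballI allI)
  note JC = ideal_subset[OF J]
  show "lan A J \<subseteq> carr" unfolding lan_def by blast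
  show "zero \<in> lan A J" unfolding lan_def using JC by auto
  fix x assume "x \<in> lan A J"
  then have xC: "x \<in> carr" and xj: "\<And>j. j \<in> J \<Longrightarrow> mul x j = zero" unfolding lan_def by auto
  { fix y assume "y \<in> lan A J"
    then have "y \<in> carr" "\<And>j. j \<in> J \<Longrightarrow> mul y j = zero" unfolding lan_def by auto
    then show "add x y \<in> lan A J" unfolding lan_def using xC xj JC by (auto simp: mul_add_left) }
  { fix c show "smul c x \<in> lan A J" unfolding lan_def using xC xj JC by (auto simp: mul_smul_left) }
  fix a assume a: "a \<in> carr"
  show "mul a x \<in> lan A J" "mul x a \<in> lan A J"
    unfolding lan_def using a xC xj JC ideal_mul_left[OF J a] by (auto simp: mul_assoc)
qed

lemma ran_eq_lan:
  assumes J: "two_sided_ideal A J" "star ` J \<subseteq> J"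
  shows "ran A J = lan A J"
proof -
  note JC = ideal_subset[OF J(1)]
  have star_J: "star j \<in> J" if "j \<in> J" for j using J(2) that by blast
  have "mul x j = zero" if x: "x \<in> ran A J" and j: "j \<in> J" for x j
  proof (rule star_mul_self_eq_zero)
    have xC: "x \<in> carr" and xJ: "\<And>j. j \<in> J \<Longrightarrow> mul j x = zero" using x unfolding ran_def by auto
    have jC: "j \<in> carr" using j JC by blast
    then show "mul x j \<in> carr" using xC by simp
    have "star (mul x j) \<in> J" using star_J ideal_mul_left[OF J(1) xC j] by blast
    then have "mul (star (mul x j)) x = zero" using xJ by blast
    then show "mul (star (mul x j)) (mul x j) = zero" using xC jC by (simp flip: mul_assoc)
  qed
  moreover have "mul j x = zero" if x: "x \<in> lan A J" and j: "j \<in> J" for x j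
  proof (rule mul_star_self_eq_zero)
    have xC: "x \<in> carr" and xJ: "\<And>j. j \<in> J \<Longrightarrow> mul x j = zero" using x unfolding lan_def by auto
    have jC: "j \<in> carr" using j JC by blast
    then show "mul j x \<in> carr" using xC by simp
    have "star (mul j x) \<in> J" using star_J ideal_mul_right[OF J(1) xC j] by blast
    then have "mul x (star (mul j x)) = zero" using xJ by blast
    then show "mul (mul j x) (star (mul j x)) = zero" using xC jC by (simp add: mul_assoc)
  qed
  ultimately show ?thesis unfolding ran_def lan_def by blast
qed

lemma star_lan_subset:
  assumes J: "two_sided_ideal A J" "star ` J \<subseteq> J"
  shows "star ` lan A J \<subseteq> lan A J"
proof
  fix y assume "y \<in> star ` lan A J"
  then obtain x where x: "x \<in> lan A J" "y = star x" by blast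
  have xC: "x \<in> carr" and xr: "\<And>j. j \<in> J \<Longrightarrow> mul j x = zero"
    using x ran_eq_lan[OF J] unfolding ran_def lan_def by auto
  have "mul (star x) j = zero" if j: "j \<in> J" for j
  proof -
    have jC: "j \<in> carr" using j ideal_subset[OF J(1)] by blast
    have "mul (star j) x = zero" using xr J(2) j by blast
    then have "star (mul (star j) x) = zero" by simp
    then show ?thesis using xC jC by (simp add: star_mul)
  qed
  then show "y \<in> lan A J" unfolding lan_def using x xC by simp
qed

lemma ideal_Int_lan:
  assumes J: "two_sided_ideal A J" "star ` J \<subseteq> J"
  shows "J \<inter> lan A J = {zero}"
proof
  show "{zero} \<subseteq> J \<inter> lan A J" using ideal_zero[OF J(1)] ideal_zero[OF ideal_lan[OF J(1)]] by blast
  show "J \<inter> lan A J \<subseteq> {zero}"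
  proof
    fix x assume x: "x \<in> J \<inter> lan A J"
    then have "x \<in> carr" "mul x (star x) = zero" using J(2) unfolding lan_def by auto
    then show "x \<in> {zero}" using mul_star_self_eq_zero by simp
  qed
qed

lemma seminorm_le_add_lan:
  assumes J: "two_sided_ideal A J" "star ` J \<subseteq> J" and p: "p \<in> semis"
    and j: "j \<in> J" and k: "k \<in> lan A J"
  shows "p j \<le> p (add j k)" "p k \<le> p (add j k)"
proof -
  have jC: "j \<in> carr" using ideal_subset[OF J(1)] j by blast
  have kC: "k \<in> carr" using k unfolding lan_def by blast
  have "mul (star j) k = zero" using k J ran_eq_lan[OF J] j unfolding ran_def by blast
  then have "mul (star j) (add j k) = mul (star j) j" using jC kC by (simp add: mul_add_right)
  then have "p j * p j \<le> p j * p (add j k)"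
    using seminorm_cstar[OF p jC] seminorm_mul[OF p star_closed[OF jC] add_closed[OF jC kC]] p jC
    by (simp add: power2_eq_square)
  then show "p j \<le> p (add j k)" by (rule seminorm_le_mul_cancel[OF p jC add_closed[OF jC kC]])
  have "star k \<in> lan A J" using star_lan_subset[OF J] k by blast
  then have "mul (star k) j = zero" using j unfolding lan_def by blast
  then have "mul (star k) (add j k) = mul (star k) k" using jC kC by (simp add: mul_add_right)
  then have "p k * p k \<le> p k * p (add j k)"
    using seminorm_cstar[OF p kC] seminorm_mul[OF p star_closed[OF kC] add_closed[OF jC kC]] p kC
    by (simp add: power2_eq_square)
  then show "p k \<le> p (add j k)" by (rule seminorm_le_mul_cancel[OF p kC add_closed[OF jC kC]])
qed

definition approx_set :: "'a set \<Rightarrow> 'a set \<Rightarrow> 'a \<Rightarrow> ('a \<Rightarrow> real) set \<Rightarrow> real \<Rightarrow> 'a set" where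
  "approx_set J K x F e = {j \<in> J. \<exists>k\<in>K. \<forall>p\<in>F. p (sub (add j k) x) < e}"

lemma approx_set_cauchy:
  assumes J: "subspace_l A J" and K: "subspace_l A K" and x: "x \<in> carr" and p: "p \<in> semis"
    and orth: "\<And>j k. j \<in> J \<Longrightarrow> k \<in> K \<Longrightarrow> p j \<le> p (add j k)"
    and a: "a \<in> approx_set J K x {p} (e/2)" and b: "b \<in> approx_set J K x {p} (e/2)"
  shows "p (sub a b) < e"
proof -
  obtain k k' where ab: "a \<in> J" "k \<in> K" "p (sub (add a k) x) < e/2"
    "b \<in> J" "k' \<in> K" "p (sub (add b k') x) < e/2"
    using a b unfolding approx_set_def by auto
  have C: "a \<in> carr" "b \<in> carr" "k \<in> carr" "k' \<in> carr"
    using ab J K subspace_subset by blast+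
  have "p (sub a b) \<le> p (add (sub a b) (sub k k'))"
    using orth subspace_sub[OF J ab(1,4)] subspace_sub[OF K ab(2,5)] by blast
  also have "add (sub a b) (sub k k') = sub (add a k) (add b k')" using C by (simp add: sub_add_add)
  also have "p \<dots> \<le> p (sub (add a k) x) + p (sub (add b k') x)"
    using seminorm_sub_triangle[OF p, of "add a k" x "add b k'"] seminorm_sub_commute[OF p, of x "add b k'"] C x
    by simp
  finally show ?thesis using ab(3,6) by simp
qed

lemma adherent_sub_limit:
  assumes J: "subspace_l A J" and K: "subspace_l A K" and x: "x \<in> carr" and j0: "j0 \<in> carr"
    and F: "F \<subseteq> semis" and j: "j \<in> approx_set J K x F (e/2)" and close: "\<forall>p\<in>F. p (sub j j0) < e/2"
  shows "\<exists>k\<in>K. \<forall>p\<in>F. p (sub k (sub x j0)) < e"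
proof -
  obtain k where k: "j \<in> J" "k \<in> K" "\<forall>p\<in>F. p (sub (add j k) x) < e/2"
    using j unfolding approx_set_def by auto
  have C: "j \<in> carr" "k \<in> carr" using k J K subspace_subset by blast+
  have "sub (add j k) x = add (sub j j0) (sub k (sub x j0))"
    using sub_add_add[of j k j0 "sub x j0"] C x j0 by (simp add: add_sub_cancel)
  then have "sub k (sub x j0) = sub (sub (add j k) x) (sub j j0)"
    using C x j0 by (simp add: sub_eq_iff_add_eq)
  then have "p (sub k (sub x j0)) < e" if "p \<in> F" for p
    using seminorm_sub_le[of p "sub (add j k) x" "sub j j0"] k(3) close that F C x j0 by fastforce
  then show ?thesis using k(2) by blast
qed

lemma approx_set_filter:
  assumes adh: "adherent A (sumset A J K) x"
  obtains G where "G \<noteq> bot" "eventually (\<lambda>y. y \<in> J) G"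
    "\<And>F e. finite F \<Longrightarrow> F \<subseteq> semis \<Longrightarrow> e > 0 \<Longrightarrow> eventually (\<lambda>y. y \<in> approx_set J K x F e) G"
proof -
  define Ix where "Ix = {(F, e). finite F \<and> F \<subseteq> semis \<and> (e::real) > 0}"
  define S where "S = (\<lambda>(F, e). approx_set J K x F e)"
  define G where "G = (INF i\<in>Ix. principal (S i))"
  have Ix: "({}, 1) \<in> Ix" unfolding Ix_def by simp
  have directed: "\<exists>c\<in>Ix. principal (S c) \<le> inf (principal (S a)) (principal (S b))"
    if "a \<in> Ix" "b \<in> Ix" for a b
  proof -
    obtain F1 e1 F2 e2 where ab: "a = (F1, e1)" "b = (F2, e2)" by (cases a, cases b) auto
    have c: "(F1 \<union> F2, min e1 e2) \<in> Ix" using that ab unfolding Ix_def by auto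
    have "S (F1 \<union> F2, min e1 e2) \<subseteq> S a \<inter> S b" unfolding S_def ab approx_set_def by force
    then show ?thesis using c by (intro bexI[of _ "(F1 \<union> F2, min e1 e2)"]) auto
  qed
  have ev: "eventually P G \<longleftrightarrow> (\<exists>i\<in>Ix. \<forall>y\<in>S i. P y)" for P
    unfolding G_def
    by (subst eventually_INF_base[OF _ directed]) (use Ix in \<open>auto simp: eventually_principal\<close>)
  have "G \<noteq> bot"
  proof
    assume "G = bot"
    then have "\<exists>i\<in>Ix. \<forall>y\<in>S i. False" using ev[of "\<lambda>_. False"] by simp
    then obtain i where i: "i \<in> Ix" "S i = {}" by blast
    obtain F e where Fe: "(F, e) \<in> Ix" "S (F, e) = {}" using i by (cases i) simp
    obtain y where "y \<in> sumset A J K" "\<forall>p\<in>F. p (sub y x) < e"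
      using adh Fe(1) unfolding adherent_def Ix_def by blast
    then show False using Fe(2) unfolding S_def sumset_def approx_set_def by blast
  qed
  moreover have "eventually (\<lambda>y. y \<in> J) G"
    unfolding ev using Ix by (auto simp: S_def approx_set_def)
  moreover have "eventually (\<lambda>y. y \<in> approx_set J K x F e) G"
    if "finite F" "F \<subseteq> semis" "e > 0" for F e
    unfolding ev using that by (intro bexI[of _ "(F, e)"]) (auto simp: Ix_def S_def)
  ultimately show ?thesis using that by blast
qed

text \<open>The first summands of better and better approximations of an adherent point x form
  a Cauchy filter on J; its limit j0 lies in J, and x - j0 is adherent to K.\<close>
lemma closedin_sumset:
  assumes J: "subspace_l A J" "closedin (lcs_topology A) J"
    and K: "subspace_l A K" "closedin (lcs_topology A) K"
    and orth: "\<And>p j k. p \<in> semis \<Longrightarrow> j \<in> J \<Longrightarrow> k \<in> K \<Longrightarrow> p j \<le> p (add j k)"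
  shows "closedin (lcs_topology A) (sumset A J K)"
  unfolding closedin_lcs_topology
proof (intro conjI ballI impI)
  show "sumset A J K \<subseteq> carr" using subspace_sumset[OF J(1) K(1)] by (rule subspace_subset)
  fix x assume x: "x \<in> carr" and adh: "adherent A (sumset A J K) x"
  obtain G where G_ne: "G \<noteq> bot" and ev_J: "eventually (\<lambda>y. y \<in> J) G"
    and ev_approx: "\<And>F e. finite F \<Longrightarrow> F \<subseteq> semis \<Longrightarrow> e > 0 \<Longrightarrow>
      eventually (\<lambda>y. y \<in> approx_set J K x F e) G"
    using approx_set_filter[OF adh] by blast
  have ev_carr: "eventually (\<lambda>y. y \<in> carr) G"
    using ev_J subspace_subset[OF J(1)] by (auto elim: eventually_mono)
  have cauchy: "\<forall>p\<in>semis. \<forall>e>0. eventually (\<lambda>(a, b). p (sub a b) < e) (G \<times>\<^sub>F G)"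
  proof (intro ballI allI impI)
    fix p e assume p: "p \<in> semis" and e: "(e::real) > 0"
    have "eventually (\<lambda>y. y \<in> approx_set J K x {p} (e/2)) G"
      using ev_approx p e by simp
    then show "eventually (\<lambda>(a, b). p (sub a b) < e) (G \<times>\<^sub>F G)"
      unfolding eventually_prod_same using approx_set_cauchy[OF J(1) K(1) x p orth[OF p]] by blast
  qed
  obtain j0 where j0: "j0 \<in> carr" "\<forall>p\<in>semis. \<forall>e>0. eventually (\<lambda>y. p (sub y j0) < e) G"
    using complete[OF G_ne ev_carr cauchy] by blast
  have j0J: "j0 \<in> J" by (rule closedin_lcs_topology_limit[OF J(2) G_ne ev_J j0])
  have "adherent A K (sub x j0)" unfolding adherent_def
  proof (intro allI impI)
    fix F e assume F: "finite F" "F \<subseteq> semis" "(e::real) > 0"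
    have "e/2 > 0" using F(3) by simp
    then have "\<forall>p\<in>F. eventually (\<lambda>y. p (sub y j0) < e/2) G" using F(2) j0(2) by blast
    then have "eventually (\<lambda>y. \<forall>p\<in>F. p (sub y j0) < e/2) G" by (rule eventually_ball_finite[OF F(1)])
    moreover have "eventually (\<lambda>y. y \<in> approx_set J K x F (e/2)) G"
      using ev_approx F by simp
    ultimately obtain j where "\<forall>p\<in>F. p (sub j j0) < e/2" "j \<in> approx_set J K x F (e/2)"
      using eventually_happens'[OF G_ne eventually_conj] by blast
    then show "\<exists>k\<in>K. \<forall>p\<in>F. p (sub k (sub x j0)) < e"
      using adherent_sub_limit[OF J(1) K(1) x j0(1) F(2)] by blast
  qed
  then have "sub x j0 \<in> K" using K(2) x j0(1) unfolding closedin_lcs_topology by simp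
  moreover have "x = add j0 (sub x j0)" using x j0(1) by (simp add: add_sub_cancel)
  ultimately show "x \<in> sumset A J K" unfolding sumset_def using j0J by blast
qed

end

section \<open>The opposite algebra\<close>

text \<open>Statements about right ideals and left annihilators are obtained from their left-handed
  counterparts in the opposite algebra.\<close>

definition opp_alg :: "'a lcs_alg \<Rightarrow> 'a lcs_alg" where
  "opp_alg A = A\<lparr>lmult := \<lambda>x y. lmult A y x\<rparr>"

lemma opp_alg_simps [simp]:
  "lcarrier (opp_alg A) = lcarrier A" "lzero (opp_alg A) = lzero A" "ladd (opp_alg A) = ladd A"
  "lsmult (opp_alg A) = lsmult A" "lmult (opp_alg A) x y = lmult A y x" "lstar (opp_alg A) = lstar A"
  "lsemis (opp_alg A) = lsemis A" "lsub (opp_alg A) = lsub A"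
  unfolding opp_alg_def lsub_def by (simp_all add: fun_eq_iff)

lemma lcs_topology_opp_alg [simp]: "lcs_topology (opp_alg A) = lcs_topology A"
  unfolding lcs_topology_def lcs_open_def by simp

lemma subspace_opp_alg [simp]: "subspace_l (opp_alg A) J \<longleftrightarrow> subspace_l A J"
  unfolding subspace_l_def by simp

lemma closed_left_ideal_opp_alg [simp]: "closed_left_ideal (opp_alg A) J \<longleftrightarrow> closed_right_ideal A J"
  unfolding closed_left_ideal_def closed_right_ideal_def by simp

lemma ran_opp_alg [simp]: "ran (opp_alg A) J = lan A J"
  unfolding ran_def lan_def by simp

lemma two_sided_ideal_opp_alg [simp]: "two_sided_ideal (opp_alg A) J \<longleftrightarrow> two_sided_ideal A J"
  unfolding two_sided_ideal_def by auto

lemma sumset_opp_alg [simp]: "sumset (opp_alg A) J K = sumset A J K"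
  unfolding sumset_def by simp

lemma sub_alg_opp_alg: "sub_alg (opp_alg A) I = opp_alg (sub_alg A I)"
  unfolding sub_alg_def opp_alg_def by simp

definition left_annihilator_alg :: "'a lcs_alg \<Rightarrow> bool" where
  "left_annihilator_alg A \<longleftrightarrow>
     (\<forall>J. closed_left_ideal A J \<longrightarrow> (ran A J = {lzero A} \<longleftrightarrow> J = lcarrier A))"

lemma annihilator_alg_iff_left_annihilator:
  "annihilator_alg A \<longleftrightarrow> left_annihilator_alg A \<and> left_annihilator_alg (opp_alg A)"
  unfolding annihilator_alg_def left_annihilator_alg_def by simp

lemma (in star_algebra) star_alg_opp_alg: "star_alg (opp_alg A)"
  unfolding star_alg_def opp_alg_simps
  by (intro conjI ballI allI)
    (simp_all add: add_assoc add_neg smul_add_scalar smul_add mul_assoc mul_add_left mul_add_right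
      mul_smul_left mul_smul_right star_add star_smul star_mul, rule add_commute, simp_all)

lemma (in locally_cstar_algebra) locally_cstar_opp_alg: "locally_cstar (opp_alg A)"
proof -
  have "cstar_seminorm (opp_alg A) p" if p: "p \<in> semis" for p
  proof -
    have "p (mul y x) \<le> p x * p y" if "x \<in> carr" "y \<in> carr" for x y
      using seminorm_mul[OF p that(2,1)] by (simp add: mult.commute)
    then show ?thesis unfolding cstar_seminorm_def opp_alg_simps
      using seminorm_nonneg[OF p] seminorm_add[OF p] seminorm_smul[OF p] seminorm_cstar_right[OF p] by simp
  qed
  then show ?thesis
    using locally_cstar star_alg_opp_alg unfolding locally_cstar_def by simp
qed

section \<open>Splitting off a closed ideal\<close>

context locally_cstar_algebra
begin

lemma ran_Int_self:
  assumes "J \<subseteq> carr" "zero \<in> J" "star ` J \<subseteq> J"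
  shows "ran A J \<inter> J = {zero}"
proof -
  have "x = zero" if x: "x \<in> ran A J" "x \<in> J" for x
  proof (rule star_mul_self_eq_zero)
    show "x \<in> carr" using x(2) assms(1) by blast
    show "mul (star x) x = zero" using x assms(3) unfolding ran_def by blast
  qed
  moreover have "zero \<in> ran A J" unfolding ran_def using assms(1) by auto
  ultimately show ?thesis using assms(2) by blast
qed

lemma ran_sumset_lan:
  assumes J: "two_sided_ideal A J" "star ` J \<subseteq> J"
  shows "ran A (sumset A J (lan A J)) = {zero}"
proof -
  have "x = zero" if x: "x \<in> ran A (sumset A J (lan A J))" for x
  proof -
    have xC: "x \<in> carr" using x unfolding ran_def by blast
    have "add j zero \<in> sumset A J (lan A J)" if "j \<in> J" for j
      unfolding sumset_def using that ideal_zero[OF ideal_lan[OF J(1)]] by blast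
    then have "mul j x = zero" if "j \<in> J" for j
      using x that ideal_subset[OF J(1)] unfolding ran_def by fastforce
    then have "x \<in> lan A J" using ran_eq_lan[OF J] xC unfolding ran_def by blast
    then have "star x \<in> lan A J" using star_lan_subset[OF J] by blast
    then have "add zero (star x) \<in> sumset A J (lan A J)"
      unfolding sumset_def using ideal_zero[OF J(1)] by blast
    then have "mul (star x) x = zero" using x xC unfolding ran_def by fastforce
    then show "x = zero" using star_mul_self_eq_zero[OF xC] by blast
  qed
  moreover have "zero \<in> ran A (sumset A J (lan A J))"
    unfolding ran_def using ideal_subset[OF ideal_sumset[OF J(1) ideal_lan[OF J(1)]]] by auto
  ultimately show ?thesis by blast
qed

lemma sumset_lan_eq_carr:
  assumes ann: "left_annihilator_alg A"
    and J: "two_sided_ideal A J" "closedin (lcs_topology A) J" "star ` J \<subseteq> J"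
  shows "sumset A J (lan A J) = carr"
proof -
  have K: "two_sided_ideal A (lan A J)" "closedin (lcs_topology A) (lan A J)"
    using ideal_lan[OF J(1)] closedin_lan[OF ideal_subset[OF J(1)]] by auto
  have "closedin (lcs_topology A) (sumset A J (lan A J))"
    using ideal_subspace[OF J(1)] J(2) ideal_subspace[OF K(1)] K(2) seminorm_le_add_lan(1)[OF J(1,3)]
    by (rule closedin_sumset)
  then have "closed_left_ideal A (sumset A J (lan A J))"
    using closed_left_ideal_if_ideal ideal_sumset[OF J(1) K(1)] by blast
  then show ?thesis using ann ran_sumset_lan[OF J(1,3)] unfolding left_annihilator_alg_def by blast
qed

text \<open>Decompose x \<in> I along the self-adjoint ideal J = I \<inter> star ` I and its annihilator:
  the second component k lies in I, so k* k lies both in J and in its annihilator, hence k = 0.\<close>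
lemma star_image_subset_ideal:
  assumes ann: "left_annihilator_alg A"
    and I: "two_sided_ideal A I" "closedin (lcs_topology A) I"
  shows "star ` I \<subseteq> I"
proof -
  note IC = ideal_subset[OF I(1)]
  define J where "J = I \<inter> star ` I"
  have J: "two_sided_ideal A J" "closedin (lcs_topology A) J" "star ` J \<subseteq> J"
  proof -
    show "two_sided_ideal A J" unfolding J_def using ideal_Int[OF I(1) ideal_star_image[OF I(1)]] .
    show "closedin (lcs_topology A) J" unfolding J_def using I(2) closedin_star_image[OF I(2)] by blast
    show "star ` J \<subseteq> J" unfolding J_def using IC by (force simp: image_iff)
  qed
  have "x \<in> star ` I" if x: "x \<in> I" for x
  proof -
    have xC: "x \<in> carr" using x IC by blast
    obtain j k where jk: "x = add j k" "j \<in> J" "k \<in> lan A J"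
      using sumset_lan_eq_carr[OF ann J] xC unfolding sumset_def by blast
    have jC: "j \<in> carr" and kC: "k \<in> carr" using jk(2,3) IC unfolding J_def lan_def by auto
    have "k = sub x j" using jk(1) jC kC xC by (simp add: sub_eq_iff_add_eq)
    then have kI: "k \<in> I" using ideal_sub[OF I(1) x] jk(2) unfolding J_def by blast
    have yI: "mul (star k) k \<in> I" using ideal_mul_left[OF I(1) star_closed[OF kC] kI] .
    have "star (mul (star k) k) = mul (star k) k" using kC by (simp add: star_mul)
    then have "mul (star k) k \<in> J" using yI unfolding J_def by (metis IntI image_eqI)
    moreover have "mul (star k) k \<in> lan A J"
      using ideal_mul_left[OF ideal_lan[OF J(1)] star_closed[OF kC] jk(3)] .
    ultimately have "mul (star k) k = zero" using ideal_Int_lan[OF J(1,3)] by blast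
    then have "x = j" using star_mul_self_eq_zero[OF kC] jk(1) jC by simp
    then show ?thesis using jk(2) unfolding J_def by blast
  qed
  then show ?thesis using IC by (force simp: image_iff)
qed

end

section \<open>Isometric *-isomorphisms\<close>

locale isometric_star_iso = locally_cstar_algebra B for B :: "'a lcs_alg" +
  fixes C :: "'b lcs_alg" and f :: "'a \<Rightarrow> 'b"
  assumes bij: "bij_betw f (lcarrier B) (lcarrier C)"
    and map_zero: "f (lzero B) = lzero C"
    and map_add: "\<And>x y. x \<in> lcarrier B \<Longrightarrow> y \<in> lcarrier B \<Longrightarrow> f (ladd B x y) = ladd C (f x) (f y)"
    and map_smul: "\<And>c x. x \<in> lcarrier B \<Longrightarrow> f (lsmult B c x) = lsmult C c (f x)"
    and map_mul: "\<And>x y. x \<in> lcarrier B \<Longrightarrow> y \<in> lcarrier B \<Longrightarrow> f (lmult B x y) = lmult C (f x) (f y)"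
    and map_star: "\<And>x. x \<in> lcarrier B \<Longrightarrow> f (lstar B x) = lstar C (f x)"
    and seminorm_image: "\<And>p. p \<in> lsemis B \<Longrightarrow> \<exists>q\<in>lsemis C. \<forall>x\<in>lcarrier B. q (f x) = p x"
    and seminorm_preimage: "\<And>q. q \<in> lsemis C \<Longrightarrow> \<exists>p\<in>lsemis B. \<forall>x\<in>lcarrier B. q (f x) = p x"
begin

lemma image_carr: "f ` carr = lcarrier C"
  using bij unfolding bij_betw_def by blast

lemma map_closed: "x \<in> carr \<Longrightarrow> f x \<in> lcarrier C"
  using image_carr by blast

lemma map_eq_iff: "x \<in> carr \<Longrightarrow> y \<in> carr \<Longrightarrow> f x = f y \<longleftrightarrow> x = y"
  using bij unfolding bij_betw_def inj_on_def by blast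

lemma ball_target: "(\<forall>X\<in>lcarrier C. P X) \<longleftrightarrow> (\<forall>x\<in>carr. P (f x))"
  unfolding image_carr[symmetric] by blast

lemma obtain_preimage:
  assumes "X \<in> lcarrier C" obtains x where "x \<in> carr" "X = f x"
  using assms image_carr by blast

lemma map_sub: "x \<in> carr \<Longrightarrow> y \<in> carr \<Longrightarrow> f (sub x y) = lsub C (f x) (f y)"
  unfolding lsub_def by (simp add: map_add map_smul)

lemmas map_simps = map_add[symmetric] map_smul[symmetric] map_mul[symmetric] map_star[symmetric]
  map_zero[symmetric] map_sub[symmetric]

lemma star_alg_target: "star_alg C"
  unfolding star_alg_def ball_target
  by (simp only: map_simps, intro conjI allI ballI)
    (simp_all add: map_simps map_closed add_assoc add_neg smul_add_scalar smul_add mul_assoc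
      mul_add_left mul_add_right mul_smul_left mul_smul_right star_add star_smul star_mul,
     rule arg_cong[where f = f], rule add_commute, simp_all)

lemma cstar_seminorm_target: "q \<in> lsemis C \<Longrightarrow> cstar_seminorm C q"
  using seminorm_preimage[of q]
  unfolding cstar_seminorm_def ball_target
  by (auto simp: map_simps seminorm_nonneg seminorm_add seminorm_smul seminorm_mul seminorm_cstar)

lemma cauchy_preimage:
  assumes F: "eventually (\<lambda>X. X \<in> lcarrier C) F"
    and cauchy: "\<forall>q\<in>lsemis C. \<forall>e>0. eventually (\<lambda>(X, Y). q (lsub C X Y) < e) (F \<times>\<^sub>F F)"
  shows "\<forall>p\<in>semis. \<forall>e>0.
    eventually (\<lambda>(a, b). p (sub a b) < e) (filtermap (inv_into carr f) F \<times>\<^sub>F filtermap (inv_into carr f) F)"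
proof (intro ballI allI impI)
  let ?g = "inv_into carr f"
  fix p e assume p: "p \<in> semis" and e: "(e::real) > 0"
  obtain q where q: "q \<in> lsemis C" "\<forall>x\<in>carr. q (f x) = p x" using seminorm_image[OF p] by blast
  have "eventually (\<lambda>(X, Y). q (lsub C X Y) < e) (F \<times>\<^sub>F F)" using cauchy q(1) e by blast
  then obtain Q where Q: "eventually Q F" "\<And>X Y. Q X \<Longrightarrow> Q Y \<Longrightarrow> q (lsub C X Y) < e"
    unfolding eventually_prod_same by blast
  have "p (sub (?g X) (?g Y)) < e" if "Q X" "Q Y" "X \<in> lcarrier C" "Y \<in> lcarrier C" for X Y
  proof -
    have "?g X \<in> carr" "?g Y \<in> carr" "f (?g X) = X" "f (?g Y) = Y"
      using that(3,4) image_carr by (auto intro: inv_into_into f_inv_into_f)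
    then show ?thesis using Q(2)[OF that(1,2)] q(2) map_sub by (metis sub_closed)
  qed
  then show "eventually (\<lambda>(a, b). p (sub a b) < e) (filtermap ?g F \<times>\<^sub>F filtermap ?g F)"
    unfolding eventually_prod_same eventually_filtermap
    by (intro exI[of _ "\<lambda>a. \<exists>X. Q X \<and> X \<in> lcarrier C \<and> ?g X = a"] conjI)
      (use eventually_conj[OF Q(1) F] in \<open>auto elim: eventually_mono\<close>)
qed

lemma complete_target:
  assumes F: "F \<noteq> bot" "eventually (\<lambda>X. X \<in> lcarrier C) F"
    and cauchy: "\<forall>q\<in>lsemis C. \<forall>e>0. eventually (\<lambda>(X, Y). q (lsub C X Y) < e) (F \<times>\<^sub>F F)"
  shows "\<exists>X\<in>lcarrier C. \<forall>q\<in>lsemis C. \<forall>e>0. eventually (\<lambda>Y. q (lsub C Y X) < e) F"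
proof -
  let ?g = "inv_into carr f"
  have g: "?g X \<in> carr" "f (?g X) = X" if "X \<in> lcarrier C" for X
    using that image_carr by (auto intro: inv_into_into f_inv_into_f)
  have "filtermap ?g F \<noteq> bot" using F(1) by (simp add: filtermap_bot_iff)
  moreover have "eventually (\<lambda>x. x \<in> carr) (filtermap ?g F)"
    unfolding eventually_filtermap using F(2) g by (auto elim: eventually_mono)
  ultimately obtain x0 where x0: "x0 \<in> carr"
    "\<forall>p\<in>semis. \<forall>e>0. eventually (\<lambda>y. p (sub y x0) < e) (filtermap ?g F)"
    using complete cauchy_preimage[OF F(2) cauchy] by blast
  have "eventually (\<lambda>Y. q (lsub C Y (f x0)) < e) F" if q: "q \<in> lsemis C" and e: "e > 0" for q e
  proof -
    obtain p where p: "p \<in> semis" "\<forall>x\<in>carr. q (f x) = p x" using seminorm_preimage[OF q] by blast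
    have "eventually (\<lambda>Y. p (sub (?g Y) x0) < e) F"
      using x0(2) p(1) e unfolding eventually_filtermap by blast
    then show ?thesis
      using F(2) by eventually_elim (use g x0(1) p(2) map_sub in \<open>metis sub_closed\<close>)
  qed
  then show ?thesis using map_closed[OF x0(1)] by blast
qed

lemma locally_cstar_target: "locally_cstar C"
  unfolding locally_cstar_def
proof (intro conjI ballI allI impI)
  show "star_alg C" by (rule star_alg_target)
  show "cstar_seminorm C q" if "q \<in> lsemis C" for q using cstar_seminorm_target that .
  fix X assume X: "X \<in> lcarrier C" and zero: "\<forall>q\<in>lsemis C. q X = 0"
  obtain x where x: "x \<in> carr" "X = f x" by (rule obtain_preimage[OF X])
  have "x = zero"
  proof (rule separating[OF x(1)])
    fix p assume "p \<in> semis"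
    then show "p x = 0" using seminorm_image zero x by metis
  qed
  then show "X = lzero C" using x map_zero by simp
qed (use complete_target in blast)

lemma adherent_image:
  assumes x: "x \<in> carr" and adh: "adherent B J x" and J: "J \<subseteq> carr"
  shows "adherent C (f ` J) (f x)"
  unfolding adherent_def
proof (intro allI impI)
  fix F e assume F: "finite F" "F \<subseteq> lsemis C" "(e::real) > 0"
  obtain \<phi> where \<phi>: "\<And>q. q \<in> lsemis C \<Longrightarrow> \<phi> q \<in> semis \<and> (\<forall>x\<in>carr. q (f x) = \<phi> q x)"
    using seminorm_preimage by metis
  have "finite (\<phi> ` F)" "\<phi> ` F \<subseteq> semis" using F \<phi> by auto
  then obtain j where j: "j \<in> J" "\<forall>p\<in>\<phi> ` F. p (sub j x) < e"
    using adh F(3) unfolding adherent_def by blast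
  have jC: "j \<in> carr" using j(1) J by blast
  have "q (lsub C (f j) (f x)) < e" if "q \<in> F" for q
  proof -
    have q: "q \<in> lsemis C" using that F(2) by blast
    have "q (lsub C (f j) (f x)) = \<phi> q (sub j x)" using \<phi>[OF q] map_sub[OF jC x, symmetric] jC x by simp
    then show ?thesis using j(2) that by simp
  qed
  then show "\<exists>Y\<in>f ` J. \<forall>q\<in>F. q (lsub C Y (f x)) < e" using j(1) by blast
qed

lemma closed_left_ideal_preimage:
  assumes J: "closed_left_ideal C J"
  shows "closed_left_ideal B {x \<in> carr. f x \<in> J}"
  unfolding closed_left_ideal_def subspace_l_def
proof (intro conjI ballI allI)
  have sJ: "lzero C \<in> J" "\<And>X Y. X \<in> J \<Longrightarrow> Y \<in> J \<Longrightarrow> ladd C X Y \<in> J"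
    "\<And>c X. X \<in> J \<Longrightarrow> lsmult C c X \<in> J" "\<And>a X. a \<in> lcarrier C \<Longrightarrow> X \<in> J \<Longrightarrow> lmult C a X \<in> J"
    using J unfolding closed_left_ideal_def subspace_l_def by blast+
  show "{x \<in> carr. f x \<in> J} \<subseteq> carr" by blast
  show "zero \<in> {x \<in> carr. f x \<in> J}" using sJ(1) map_zero by simp
  fix x assume x: "x \<in> {x \<in> carr. f x \<in> J}"
  show "add x y \<in> {x \<in> carr. f x \<in> J}" if "y \<in> {x \<in> carr. f x \<in> J}" for y
    using x that sJ(2) by (simp add: map_add)
  show "smul c x \<in> {x \<in> carr. f x \<in> J}" for c
    using x sJ(3) by (simp add: map_smul)
  show "mul a x \<in> {x \<in> carr. f x \<in> J}" if "a \<in> carr" for a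
    using x that sJ(4) map_closed by (simp add: map_mul)
next
  have "closedin (lcs_topology C) J" using J unfolding closed_left_ideal_def by blast
  then have closed: "f x \<in> J" if "x \<in> carr" "adherent C J (f x)" for x
    using that map_closed unfolding closedin_lcs_topology by blast
  show "closedin (lcs_topology B) {x \<in> carr. f x \<in> J}"
    unfolding closedin_lcs_topology
  proof (intro conjI ballI impI)
    fix x assume x: "x \<in> carr" and adh: "adherent B {x \<in> carr. f x \<in> J} x"
    have "adherent C (f ` {x \<in> carr. f x \<in> J}) (f x)" using adherent_image[OF x adh] by blast
    then have "adherent C J (f x)" by (rule adherent_mono) blast
    then show "x \<in> {x \<in> carr. f x \<in> J}" using closed x by blast
  qed blast
qed

lemma mul_eq_zero_target:
  "s \<in> carr \<Longrightarrow> x \<in> carr \<Longrightarrow> lmult C (f s) (f x) = lzero C \<longleftrightarrow> mul s x = zero"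
  using map_eq_iff[of "mul s x" zero] by (simp add: map_mul map_zero)

lemma ran_target:
  assumes J: "J \<subseteq> lcarrier C"
  shows "ran C J = f ` ran B {x \<in> carr. f x \<in> J}"
proof (intro equalityI subsetI)
  fix Y assume Y: "Y \<in> ran C J"
  then obtain x where x: "x \<in> carr" "Y = f x" unfolding ran_def by (blast elim: obtain_preimage)
  have "mul s x = zero" if "s \<in> carr" "f s \<in> J" for s
    using Y x that mul_eq_zero_target unfolding ran_def by blast
  then show "Y \<in> f ` ran B {x \<in> carr. f x \<in> J}" using x unfolding ran_def by blast
next
  fix Y assume "Y \<in> f ` ran B {x \<in> carr. f x \<in> J}"
  then obtain x where x: "x \<in> carr" "Y = f x" "\<And>s. s \<in> carr \<Longrightarrow> f s \<in> J \<Longrightarrow> mul s x = zero"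
    unfolding ran_def by blast
  have "lmult C S Y = lzero C" if S: "S \<in> J" for S
  proof -
    obtain s where "s \<in> carr" "S = f s" using S J by (blast elim: obtain_preimage)
    then show ?thesis using x S mul_eq_zero_target by simp
  qed
  then show "Y \<in> ran C J" unfolding ran_def using x map_closed by blast
qed

lemma image_eq_zero_iff:
  assumes "R \<subseteq> carr"
  shows "f ` R = {lzero C} \<longleftrightarrow> R = {zero}"
proof
  assume R: "f ` R = {lzero C}"
  have "x = zero" if x: "x \<in> R" for x
  proof -
    have "f x = f zero" using imageI[OF x, of f] R map_zero by simp
    moreover have "x \<in> carr" using x assms by blast
    ultimately show ?thesis using map_eq_iff[of x zero] by simp
  qed
  moreover have "R \<noteq> {}" using R by blast
  ultimately show "R = {zero}" by blast
qed (simp add: map_zero)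

lemma left_annihilator_target:
  assumes "left_annihilator_alg B"
  shows "left_annihilator_alg C"
  unfolding left_annihilator_alg_def
proof (intro allI impI)
  fix J assume J: "closed_left_ideal C J"
  have JC: "J \<subseteq> lcarrier C" using J unfolding closed_left_ideal_def subspace_l_def by blast
  let ?J' = "{x \<in> carr. f x \<in> J}"
  have "ran C J = {lzero C} \<longleftrightarrow> ran B ?J' = {zero}"
    unfolding ran_target[OF JC] by (rule image_eq_zero_iff) (auto simp: ran_def)
  also have "\<dots> \<longleftrightarrow> ?J' = carr"
    using assms closed_left_ideal_preimage[OF J] unfolding left_annihilator_alg_def by blast
  also have "\<dots> \<longleftrightarrow> J = lcarrier C"
  proof
    assume "?J' = carr"
    then have "f ` carr \<subseteq> J" by blast
    then show "J = lcarrier C" using JC image_carr by blast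
  qed (use map_closed in blast)
  finally show "ran C J = {lzero C} \<longleftrightarrow> J = lcarrier C" .
qed

lemma isometric_star_iso_opp: "isometric_star_iso (opp_alg B) (opp_alg C) f"
  unfolding isometric_star_iso_def isometric_star_iso_axioms_def locally_cstar_algebra_def
  using locally_cstar_opp_alg bij map_zero map_add map_smul map_mul map_star seminorm_image seminorm_preimage
  by simp

lemma annihilator_target: "annihilator_alg B \<Longrightarrow> annihilator_alg C"
  using left_annihilator_target isometric_star_iso.left_annihilator_target[OF isometric_star_iso_opp]
  unfolding annihilator_alg_iff_left_annihilator by blast

end

section \<open>Subalgebras and quotients\<close>

lemma sub_alg_simps [simp]:
  "lcarrier (sub_alg A I) = I" "lzero (sub_alg A I) = lzero A" "ladd (sub_alg A I) = ladd A"
  "lsmult (sub_alg A I) = lsmult A" "lmult (sub_alg A I) = lmult A" "lstar (sub_alg A I) = lstar A"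
  "lsemis (sub_alg A I) = lsemis A" "lsub (sub_alg A I) = lsub A"
  unfolding sub_alg_def lsub_def by (simp_all add: fun_eq_iff)

lemma adherent_sub_alg [simp]: "adherent (sub_alg A I) = adherent A"
  unfolding adherent_def by (simp add: fun_eq_iff)

lemma subspace_sub_alg_iff:
  "I \<subseteq> lcarrier A \<Longrightarrow> subspace_l (sub_alg A I) J \<longleftrightarrow> J \<subseteq> I \<and> subspace_l A J"
  unfolding subspace_l_def by auto

lemma ran_sub_alg: "ran (sub_alg A I) J = ran A J \<inter> I" if "I \<subseteq> lcarrier A"
  using that unfolding ran_def by auto

lemma (in star_algebra) star_alg_sub_alg:
  assumes S: "subspace_l A S" "\<And>a b. a \<in> S \<Longrightarrow> b \<in> S \<Longrightarrow> mul a b \<in> S" "star ` S \<subseteq> S"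
  shows "star_alg (sub_alg A S)"
proof -
  have SC: "\<And>x. x \<in> S \<Longrightarrow> x \<in> carr" using subspace_subset[OF S(1)] by blast
  have cl: "zero \<in> S" "\<And>x y. x \<in> S \<Longrightarrow> y \<in> S \<Longrightarrow> add x y \<in> S"
    "\<And>c x. x \<in> S \<Longrightarrow> smul c x \<in> S" "\<And>x. x \<in> S \<Longrightarrow> star x \<in> S"
    using S unfolding subspace_l_def by auto
  show ?thesis unfolding star_alg_def sub_alg_simps
    by (intro conjI ballI allI)
      (simp_all add: cl S(2) SC add_assoc add_neg smul_add_scalar smul_add mul_assoc mul_add_left
        mul_add_right mul_smul_left mul_smul_right star_add star_smul star_mul,
       rule add_commute, simp_all add: SC)
qed

context locally_cstar_algebra
begin

lemma locally_cstar_sub_alg: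
  assumes S: "subspace_l A S" "\<And>a b. a \<in> S \<Longrightarrow> b \<in> S \<Longrightarrow> mul a b \<in> S" "star ` S \<subseteq> S"
    and closed: "closedin (lcs_topology A) S"
  shows "locally_cstar (sub_alg A S)"
  unfolding locally_cstar_def
proof (intro conjI allI impI ballI)
  have SC: "S \<subseteq> carr" using subspace_subset[OF S(1)] .
  show "star_alg (sub_alg A S)" using star_alg_sub_alg[OF S] .
  show "cstar_seminorm (sub_alg A S) p" if "p \<in> lsemis (sub_alg A S)" for p
    using cstar_seminorm[of p] that SC unfolding cstar_seminorm_def sub_alg_simps by blast
  show "x = lzero (sub_alg A S)" if "x \<in> lcarrier (sub_alg A S)" "\<forall>p\<in>lsemis (sub_alg A S). p x = 0" for x
    using separating[of x] that SC by auto
  fix F :: "'a filter"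
  assume F: "F \<noteq> bot" "eventually (\<lambda>x. x \<in> lcarrier (sub_alg A S)) F"
    and cauchy: "\<forall>p\<in>lsemis (sub_alg A S). \<forall>e>0.
      eventually (\<lambda>(x, y). p (lsub (sub_alg A S) x y) < e) (F \<times>\<^sub>F F)"
  have "eventually (\<lambda>x. x \<in> carr) F" using F(2) SC by (auto elim: eventually_mono)
  then obtain x where x: "x \<in> carr" "\<forall>p\<in>semis. \<forall>e>0. eventually (\<lambda>y. p (sub y x) < e) F"
    using complete[OF F(1)] cauchy by auto
  have "x \<in> S" by (rule closedin_lcs_topology_limit[OF closed F(1) _ x]) (use F(2) in simp)
  then show "\<exists>x\<in>lcarrier (sub_alg A S). \<forall>p\<in>lsemis (sub_alg A S). \<forall>e>0.
      eventually (\<lambda>y. p (lsub (sub_alg A S) y x) < e) F"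
    using x by auto
qed

end

lemma quot_alg_simps [simp]:
  "lcarrier (quot_alg A I) = coset_l A I ` lcarrier A"
  "lzero (quot_alg A I) = coset_l A I (lzero A)"
  "ladd (quot_alg A I) X Y = coset_l A I (ladd A (rep_l X) (rep_l Y))"
  "lsmult (quot_alg A I) c X = coset_l A I (lsmult A c (rep_l X))"
  "lmult (quot_alg A I) X Y = coset_l A I (lmult A (rep_l X) (rep_l Y))"
  "lstar (quot_alg A I) X = coset_l A I (lstar A (rep_l X))"
  "lsemis (quot_alg A I) = {(\<lambda>X. Inf (p ` X)) | p. p \<in> lsemis A}"
  unfolding quot_alg_def by simp_all

context star_algebra
begin

abbreviation "coset I \<equiv> coset_l A I"

lemma mem_coset_iff: "y \<in> coset I x \<longleftrightarrow> (\<exists>i\<in>I. y = add x i)"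
  unfolding coset_l_def by blast

context
  fixes I assumes I: "subspace_l A I"
begin

lemma mem_coset_self: "x \<in> carr \<Longrightarrow> x \<in> coset I x"
  using I unfolding mem_coset_iff subspace_l_def by force

lemma coset_eq_iff:
  assumes x: "x \<in> carr" and y: "y \<in> carr"
  shows "coset I x = coset I y \<longleftrightarrow> sub x y \<in> I"
proof -
  have sub_le: "coset I a \<subseteq> coset I b" if a: "a \<in> carr" and b: "b \<in> carr" and ab: "sub a b \<in> I" for a b
  proof
    fix w assume "w \<in> coset I a"
    then obtain i where i: "i \<in> I" "w = add a i" unfolding mem_coset_iff by blast
    have iC: "i \<in> carr" using i(1) subspace_subset[OF I] by blast
    have "w = add b (add (sub a b) i)" using i(2) a b iC by (simp flip: add_assoc add: add_sub_cancel)
    moreover have "add (sub a b) i \<in> I" using I ab i(1) unfolding subspace_l_def by blast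
    ultimately show "w \<in> coset I b" unfolding mem_coset_iff by blast
  qed
  show ?thesis
  proof
    assume "coset I x = coset I y"
    then have "x \<in> coset I y" using mem_coset_self[OF x] by simp
    then obtain i where i: "i \<in> I" "x = add y i" unfolding mem_coset_iff by blast
    have "i \<in> carr" using i(1) subspace_subset[OF I] by blast
    then have "i = sub x y" using sub_eq_iff_add_eq[OF y _ x] i(2) by simp
    then show "sub x y \<in> I" using i(1) by simp
  next
    assume xy: "sub x y \<in> I"
    then have "sub y x \<in> I" using I neg_sub[OF x y] unfolding subspace_l_def by metis
    then show "coset I x = coset I y" using sub_le[OF x y xy] sub_le[OF y x] x y by blast
  qed
qed

lemma rep_coset:
  assumes "x \<in> carr"
  shows "rep_l (coset I x) \<in> carr" "sub (rep_l (coset I x)) x \<in> I"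
proof -
  have "rep_l (coset I x) \<in> coset I x"
    unfolding rep_l_def using mem_coset_self[OF assms] by (rule someI)
  then obtain i where "i \<in> I" "rep_l (coset I x) = add x i" unfolding mem_coset_iff by blast
  moreover have "i \<in> carr" using calculation(1) subspace_subset[OF I] by blast
  ultimately show "rep_l (coset I x) \<in> carr" "sub (rep_l (coset I x)) x \<in> I"
    using assms by (simp_all add: sub_add_left)
qed

lemma quot_add: "x \<in> carr \<Longrightarrow> y \<in> carr \<Longrightarrow> ladd (quot_alg A I) (coset I x) (coset I y) = coset I (add x y)"
  using rep_coset[of x] rep_coset[of y] I sub_add_add[of "rep_l (coset I x)" "rep_l (coset I y)" x y]
  by (simp add: coset_eq_iff subspace_l_def)

lemma quot_smul:
  assumes x: "x \<in> carr"
  shows "lsmult (quot_alg A I) c (coset I x) = coset I (smul c x)"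
proof -
  note r = rep_coset[OF x]
  have "sub (smul c (rep_l (coset I x))) (smul c x) = smul c (sub (rep_l (coset I x)) x)"
    using r(1) x by (simp add: smul_sub)
  also have "\<dots> \<in> I" using I r(2) unfolding subspace_l_def by blast
  finally show ?thesis using r(1) x by (simp add: coset_eq_iff)
qed

lemma quot_sub: "x \<in> carr \<Longrightarrow> y \<in> carr \<Longrightarrow> lsub (quot_alg A I) (coset I x) (coset I y) = coset I (sub x y)"
  unfolding lsub_def by (simp only: quot_smul quot_add smul_closed)

lemma quot_star:
  assumes "star ` I \<subseteq> I" "x \<in> carr"
  shows "lstar (quot_alg A I) (coset I x) = coset I (star x)"
proof -
  note r = rep_coset[OF assms(2)]
  have "sub (star (rep_l (coset I x))) (star x) = star (sub (rep_l (coset I x)) x)"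
    using r(1) assms(2) by (simp add: star_sub)
  also have "\<dots> \<in> I" using assms(1) r(2) by blast
  finally show ?thesis using r(1) assms(2) by (simp add: coset_eq_iff)
qed

end

lemma quot_mul:
  assumes I: "two_sided_ideal A I" and x: "x \<in> carr" and y: "y \<in> carr"
  shows "lmult (quot_alg A I) (coset I x) (coset I y) = coset I (mul x y)"
proof -
  let ?r = "rep_l (coset I x)" and ?s = "rep_l (coset I y)"
  note r = rep_coset[OF ideal_subspace[OF I] x] rep_coset[OF ideal_subspace[OF I] y]
  have "sub (mul ?r ?s) (mul x y) = add (mul (sub ?r x) ?s) (mul x (sub ?s y))"
    using r x y by (simp add: mul_sub_left mul_sub_right sub_add_sub)
  then have "sub (mul ?r ?s) (mul x y) \<in> I"
    using ideal_add[OF I ideal_mul_right[OF I r(3) r(2)] ideal_mul_left[OF I x r(4)]] by simp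
  then show ?thesis using r x y coset_eq_iff[OF ideal_subspace[OF I]] by simp
qed

end

lemma prod_alg_simps [simp]:
  "lcarrier (prod_alg B C) = lcarrier B \<times> lcarrier C"
  "ladd (prod_alg B C) u v = (ladd B (fst u) (fst v), ladd C (snd u) (snd v))"
  "lsmult (prod_alg B C) c u = (lsmult B c (fst u), lsmult C c (snd u))"
  "lmult (prod_alg B C) u v = (lmult B (fst u) (fst v), lmult C (snd u) (snd v))"
  "lstar (prod_alg B C) u = (lstar B (fst u), lstar C (snd u))"
  "lsemis (prod_alg B C) = {(\<lambda>z. p (fst z)) | p. p \<in> lsemis B} \<union> {(\<lambda>z. q (snd z)) | q. q \<in> lsemis C}"
  unfolding prod_alg_def by simp_all

lemma lsub_prod_alg: "lsub (prod_alg B C) u v = (lsub B (fst u) (fst v), lsub C (snd u) (snd v))"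
  unfolding lsub_def by simp

section \<open>Orthogonal ideals\<close>

locale orthogonal_ideals = locally_cstar_algebra +
  fixes I K :: "'a set"
  assumes ideal_I: "two_sided_ideal A I" and closed_I: "closedin (lcs_topology A) I"
    and star_I: "star ` I \<subseteq> I"
    and ideal_K: "two_sided_ideal A K" and closed_K: "closedin (lcs_topology A) K"
    and star_K: "star ` K \<subseteq> K"
    and mul_I_K: "\<And>i k. i \<in> I \<Longrightarrow> k \<in> K \<Longrightarrow> mul i k = zero"
    and sumset_I_K: "sumset A I K = carr"
begin

lemma I_subset: "I \<subseteq> carr" and K_subset: "K \<subseteq> carr"
  using ideal_subset[OF ideal_I] ideal_subset[OF ideal_K] .

lemma mul_K_I:
  assumes "i \<in> I" "k \<in> K"
  shows "mul k i = zero"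
proof -
  have C: "i \<in> carr" "k \<in> carr" using assms I_subset K_subset by blast+
  have "star i \<in> I" "star k \<in> K" using assms star_I star_K by blast+
  then have "star (mul k i) = zero" using C mul_I_K by (simp add: star_mul)
  then have "star (star (mul k i)) = zero" by simp
  then show ?thesis using C by simp
qed

lemma Int_I_K: "I \<inter> K = {zero}"
proof -
  have "x = zero" if "x \<in> I" "x \<in> K" for x
  proof (rule mul_star_self_eq_zero)
    show "x \<in> carr" using that I_subset by blast
    show "mul x (star x) = zero" using that star_K by (intro mul_I_K) blast+
  qed
  then show ?thesis using ideal_zero[OF ideal_I] ideal_zero[OF ideal_K] by blast
qed

lemma K_subset_lan: "K \<subseteq> lan A I"
  unfolding lan_def using K_subset mul_K_I by blast

lemma seminorm_le_add:
  assumes "p \<in> semis" "i \<in> I" "k \<in> K"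
  shows "p i \<le> p (add i k)" "p k \<le> p (add i k)"
  using seminorm_le_add_lan[OF ideal_I star_I assms(1,2)] assms(3) K_subset_lan by blast+

lemma decompose:
  assumes "x \<in> carr"
  obtains i k where "i \<in> I" "k \<in> K" "x = add i k"
  using assms sumset_I_K unfolding sumset_def by blast

lemma decompose_unique:
  assumes "i \<in> I" "k \<in> K" "i' \<in> I" "k' \<in> K" "add i k = add i' k'"
  shows "i = i'" "k = k'"
proof -
  have C: "i \<in> carr" "k \<in> carr" "i' \<in> carr" "k' \<in> carr" using assms(1-4) I_subset K_subset by auto
  have "add (sub i i') (sub k k') = zero" using sub_add_add[OF C] assms(5) C by simp
  then have "sub k k' = neg (sub i i')"
    using C sub_eq_iff_add_eq[of "sub i i'" "sub k k'" zero] unfolding lsub_def by simp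
  moreover have "sub k k' \<in> K" "neg (sub i i') \<in> I"
    using ideal_sub[OF ideal_K assms(2,4)] ideal_smul[OF ideal_I ideal_sub[OF ideal_I assms(1,3)]] by auto
  ultimately have k: "sub k k' = zero" using Int_I_K by auto
  then have "neg (neg (sub i i')) = zero" using \<open>sub k k' = neg (sub i i')\<close> by simp
  then have "sub i i' = zero" using C by simp
  then show "i = i'" "k = k'" using k C sub_eq_zero_iff by auto
qed

lemma orthogonal_ideals_swap: "orthogonal_ideals A K I"
  using locally_cstar_algebra_axioms ideal_K closed_K star_K ideal_I closed_I star_I mul_K_I
    sumset_I_K sumset_commute[OF I_subset K_subset]
  unfolding orthogonal_ideals_def orthogonal_ideals_axioms_def by auto

lemma orthogonal_ideals_opp: "orthogonal_ideals (opp_alg A) I K"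
  using locally_cstar_opp_alg ideal_K closed_K star_K ideal_I closed_I star_I mul_K_I sumset_I_K
  unfolding orthogonal_ideals_def orthogonal_ideals_axioms_def locally_cstar_algebra_def by simp

lemma closedin_sumset_K:
  assumes J: "J \<subseteq> I" "closedin (lcs_topology (sub_alg A I)) J"
  shows "closedin (lcs_topology A) (sumset A J K)"
  unfolding closedin_lcs_topology
proof (intro conjI ballI impI)
  show "sumset A J K \<subseteq> carr" unfolding sumset_def using J(1) I_subset K_subset by (blast intro: add_closed)
  fix x assume x: "x \<in> carr" and adh: "adherent A (sumset A J K) x"
  obtain xi xk where xs: "xi \<in> I" "xk \<in> K" "x = add xi xk" using decompose[OF x] .
  have "adherent A J xi" unfolding adherent_def
  proof (intro allI impI)
    fix F e assume F: "finite F" "F \<subseteq> semis" "(e::real) > 0"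
    then obtain y where y: "y \<in> sumset A J K" "\<forall>p\<in>F. p (sub y x) < e"
      using adh unfolding adherent_def by blast
    then obtain j k where jk: "j \<in> J" "k \<in> K" "y = add j k" unfolding sumset_def by blast
    have "j \<in> carr" "k \<in> carr" "xi \<in> carr" "xk \<in> carr"
      using jk xs J(1) I_subset K_subset by blast+
    then have "sub y x = add (sub j xi) (sub k xk)" using jk(3) xs(3) by (simp add: sub_add_add)
    moreover have "sub j xi \<in> I" "sub k xk \<in> K"
      using jk xs J(1) ideal_sub[OF ideal_I] ideal_sub[OF ideal_K] by auto
    ultimately have "p (sub j xi) < e" if "p \<in> F" for p
      using seminorm_le_add(1)[of p "sub j xi" "sub k xk"] y(2) that F(2) by fastforce
    then show "\<exists>j\<in>J. \<forall>p\<in>F. p (sub j xi) < e" using jk(1) by blast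
  qed
  then have "xi \<in> J" using J(2) xs(1) unfolding closedin_lcs_topology by simp
  then show "x \<in> sumset A J K" unfolding sumset_def using xs by blast
qed

lemma closed_left_ideal_sumset_K:
  assumes J: "closed_left_ideal (sub_alg A I) J"
  shows "closed_left_ideal A (sumset A J K)"
proof -
  have Js: "J \<subseteq> I" "subspace_l A J" "\<And>a x. a \<in> I \<Longrightarrow> x \<in> J \<Longrightarrow> mul a x \<in> J"
    "closedin (lcs_topology (sub_alg A I)) J"
    using J subspace_sub_alg_iff[OF I_subset] unfolding closed_left_ideal_def by auto
  have "mul a x \<in> sumset A J K" if a: "a \<in> carr" and "x \<in> sumset A J K" for a x
  proof -
    obtain j k where x: "j \<in> J" "k \<in> K" "x = add j k" using \<open>x \<in> sumset A J K\<close> unfolding sumset_def by blast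
    obtain ai ak where as: "ai \<in> I" "ak \<in> K" "a = add ai ak" using decompose[OF a] .
    have C: "j \<in> carr" "k \<in> carr" "ai \<in> carr" "ak \<in> carr" using x as Js(1) I_subset K_subset by auto
    have "mul ak j = zero" using mul_K_I x(1) Js(1) as(2) by blast
    then have "mul a j = mul ai j" using as(3) C by (simp add: mul_add_left)
    then have "mul a x = add (mul ai j) (mul a k)" using x(3) C a by (simp add: mul_add_right)
    then show ?thesis
      unfolding sumset_def using Js(3)[OF as(1) x(1)] ideal_mul_left[OF ideal_K a x(2)] by blast
  qed
  moreover have "subspace_l A (sumset A J K)" using subspace_sumset[OF Js(2) ideal_subspace[OF ideal_K]] .
  ultimately show ?thesis unfolding closed_left_ideal_def using closedin_sumset_K[OF Js(1,4)] by blast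
qed

lemma ran_sumset_K:
  assumes J: "J \<subseteq> I" "zero \<in> J" and ran_J: "ran (sub_alg A I) J = {zero}"
  shows "ran A (sumset A J K) = {zero}"
proof -
  have "x = zero" if x: "x \<in> ran A (sumset A J K)" for x
  proof -
    have xC: "x \<in> carr" using x unfolding ran_def by blast
    obtain xi xk where xs: "xi \<in> I" "xk \<in> K" "x = add xi xk" using decompose[OF xC] .
    have C: "xi \<in> carr" "xk \<in> carr" using xs I_subset K_subset by auto
    have "mul j xi = zero" if j: "j \<in> J" for j
    proof -
      have jC: "j \<in> carr" using j J(1) I_subset by blast
      have "add j zero \<in> sumset A J K" unfolding sumset_def using j ideal_zero[OF ideal_K] by blast
      then have "mul j x = zero" using x jC unfolding ran_def by fastforce
      moreover have "mul j xk = zero" using mul_I_K j J(1) xs(2) by blast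
      ultimately show ?thesis using xs(3) C jC by (simp add: mul_add_right)
    qed
    then have "xi \<in> ran A J" unfolding ran_def using C by blast
    then have "xi \<in> ran (sub_alg A I) J" using xs(1) ran_sub_alg[OF I_subset] by blast
    then have xi: "xi = zero" using ran_J by blast
    have "mul k xk = zero" if k: "k \<in> K" for k
    proof -
      have kC: "k \<in> carr" using k K_subset by blast
      have "add zero k \<in> sumset A J K" unfolding sumset_def using k J(2) by blast
      then have "mul k x = zero" using x kC unfolding ran_def by fastforce
      moreover have "mul k xi = zero" using mul_K_I xs(1) k by blast
      ultimately show ?thesis using xs(3) C kC by (simp add: mul_add_right)
    qed
    then have "xk \<in> ran A K \<inter> K" unfolding ran_def using xs(2) C by blast
    then have "xk = zero" using ran_Int_self[OF K_subset ideal_zero[OF ideal_K] star_K] by blast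
    then show "x = zero" using xs(3) xi by simp
  qed
  moreover have "sumset A J K \<subseteq> carr"
    unfolding sumset_def using J(1) I_subset K_subset by (blast intro: add_closed)
  then have "zero \<in> ran A (sumset A J K)" by (rule zero_mem_ran)
  ultimately show ?thesis by blast
qed

lemma left_annihilator_sub_alg:
  assumes ann: "left_annihilator_alg A"
  shows "left_annihilator_alg (sub_alg A I)"
  unfolding left_annihilator_alg_def sub_alg_simps
proof (intro allI impI iffI)
  fix J assume J: "closed_left_ideal (sub_alg A I) J" and ran_J: "ran (sub_alg A I) J = {zero}"
  have Js: "J \<subseteq> I" "zero \<in> J"
    using J subspace_sub_alg_iff[OF I_subset] unfolding closed_left_ideal_def subspace_l_def by auto
  have "sumset A J K = carr"
    using ann closed_left_ideal_sumset_K[OF J] ran_sumset_K[OF Js ran_J]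
    unfolding left_annihilator_alg_def by blast
  have "x \<in> J" if x: "x \<in> I" for x
  proof -
    obtain j k where jk: "j \<in> J" "k \<in> K" "x = add j k"
      using \<open>sumset A J K = carr\<close> x I_subset unfolding sumset_def by blast
    have "add j k = add x zero" using jk(3) x I_subset by auto
    then have "j = x" using decompose_unique(1)[OF _ jk(2) x ideal_zero[OF ideal_K]] jk(1) Js(1) by blast
    then show ?thesis using jk(1) by blast
  qed
  then show "J = I" using Js(1) by blast
next
  fix J assume "J = I"
  then show "ran (sub_alg A I) J = {zero}"
    using ran_Int_self[OF I_subset ideal_zero[OF ideal_I] star_I] ran_sub_alg[OF I_subset] by simp
qed

lemma annihilator_sub_alg: "annihilator_alg A \<Longrightarrow> annihilator_alg (sub_alg A I)"
  using left_annihilator_sub_alg orthogonal_ideals.left_annihilator_sub_alg[OF orthogonal_ideals_opp]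
  unfolding annihilator_alg_iff_left_annihilator sub_alg_opp_alg by blast

lemma locally_cstar_sub_alg_I: "locally_cstar (sub_alg A I)"
  using locally_cstar_sub_alg[OF ideal_subspace[OF ideal_I] _ star_I closed_I]
    ideal_mul_left[OF ideal_I] I_subset by blast

lemma Inf_seminorm_coset:
  assumes p: "p \<in> semis" and k: "k \<in> K"
  shows "Inf (p ` coset I k) = p k"
proof (rule cInf_eq_minimum)
  have kC: "k \<in> carr" using k K_subset by blast
  show "p k \<in> p ` coset I k" using mem_coset_self[OF ideal_subspace[OF ideal_I] kC] by blast
  fix v assume "v \<in> p ` coset I k"
  then obtain w where "w \<in> coset I k" "v = p w" by blast
  then obtain i where i: "i \<in> I" "v = p (add k i)" unfolding mem_coset_iff by blast
  have "i \<in> carr" using i(1) I_subset by blast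
  then have "add k i = add i k" by (rule add_commute[OF kC])
  then show "p k \<le> v" using seminorm_le_add(2)[OF p i(1) k] i(2) by simp
qed

lemma isometric_star_iso_quot: "isometric_star_iso (sub_alg A K) (quot_alg A I) (coset I)"
proof -
  note I = ideal_subspace[OF ideal_I]
  have inj: "inj_on (coset I) K"
  proof
    fix k k' assume k: "k \<in> K" "k' \<in> K" and eq: "coset I k = coset I k'"
    have C: "k \<in> carr" "k' \<in> carr" using k K_subset by auto
    have "sub k k' \<in> I \<inter> K" using coset_eq_iff[OF I C] eq ideal_sub[OF ideal_K k] by simp
    then show "k = k'" using Int_I_K C sub_eq_zero_iff by blast
  qed
  have "coset I x \<in> coset I ` K" if x: "x \<in> carr" for x
  proof -
    obtain i k where s: "i \<in> I" "k \<in> K" "x = add i k" using decompose[OF x] .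
    have C: "i \<in> carr" "k \<in> carr" using s I_subset K_subset by auto
    have "sub x k = i" using s(3) C by (simp add: sub_add_right)
    then show ?thesis using coset_eq_iff[OF I x C(2)] s(1,2) by auto
  qed
  then have image: "coset I ` K = coset I ` carr" using K_subset by blast
  have seminorms: "\<forall>k\<in>K. (\<lambda>X. Inf (p ` X)) (coset I k) = p k" if "p \<in> semis" for p
    using Inf_seminorm_coset[OF that] by simp
  show ?thesis
    unfolding isometric_star_iso_def isometric_star_iso_axioms_def locally_cstar_algebra_def
  proof (intro conjI allI ballI impI)
    show "locally_cstar (sub_alg A K)"
      using orthogonal_ideals.locally_cstar_sub_alg_I[OF orthogonal_ideals_swap] .
    show "bij_betw (coset I) (lcarrier (sub_alg A K)) (lcarrier (quot_alg A I))"
      unfolding bij_betw_def using inj image by simp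
  qed (use K_subset I quot_add quot_smul quot_mul[OF ideal_I] quot_star[OF I star_I] seminorms in
    \<open>auto simp: subset_iff\<close>)
qed

lemma annihilator_locally_cstar_quot:
  assumes "annihilator_alg A"
  shows "annihilator_locally_cstar (quot_alg A I)"
proof -
  interpret Q: isometric_star_iso "sub_alg A K" "quot_alg A I" "coset I"
    by (rule isometric_star_iso_quot)
  have "annihilator_alg (sub_alg A K)"
    using orthogonal_ideals.annihilator_sub_alg[OF orthogonal_ideals_swap assms] .
  then show ?thesis
    unfolding annihilator_locally_cstar_def using Q.locally_cstar_target Q.annihilator_target by blast
qed

definition proj_I :: "'a \<Rightarrow> 'a" where
  "proj_I x = (THE i. i \<in> I \<and> sub x i \<in> K)"

definition proj_K :: "'a \<Rightarrow> 'a" where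
  "proj_K x = sub x (proj_I x)"

lemma proj_I_add_eq:
  assumes "i \<in> I" "k \<in> K"
  shows "proj_I (add i k) = i"
  unfolding proj_I_def
proof (rule the_equality)
  have C: "i \<in> carr" "k \<in> carr" using assms I_subset K_subset by auto
  show "i \<in> I \<and> sub (add i k) i \<in> K" using assms C by (simp add: sub_add_left)
  fix i' assume i': "i' \<in> I \<and> sub (add i k) i' \<in> K"
  have "add i' (sub (add i k) i') = add i k" using i' C I_subset by (auto simp: add_sub_cancel)
  then show "i' = i" using decompose_unique(1)[of i' "sub (add i k) i'" i k] i' assms by simp
qed

lemma
  assumes "x \<in> carr"
  shows proj_I_mem: "proj_I x \<in> I" and proj_K_mem: "proj_K x \<in> K"
    and add_proj: "add (proj_I x) (proj_K x) = x"
proof -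
  obtain i k where s: "i \<in> I" "k \<in> K" "x = add i k" using decompose[OF assms] .
  have C: "i \<in> carr" "k \<in> carr" using s I_subset K_subset by auto
  show "proj_I x \<in> I" using proj_I_add_eq[OF s(1,2)] s by simp
  show "proj_K x \<in> K" unfolding proj_K_def using proj_I_add_eq[OF s(1,2)] s C
    by (simp add: sub_add_left)
  show "add (proj_I x) (proj_K x) = x" unfolding proj_K_def
    using proj_I_add_eq[OF s(1,2)] s C by (simp add: add_sub_cancel)
qed

lemma proj_I_eqI: "x \<in> carr \<Longrightarrow> i \<in> I \<Longrightarrow> k \<in> K \<Longrightarrow> x = add i k \<Longrightarrow> proj_I x = i"
  using proj_I_add_eq by simp

lemma
  assumes x: "x \<in> carr" and y: "y \<in> carr"
  shows proj_I_add: "proj_I (add x y) = add (proj_I x) (proj_I y)"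
    and proj_I_mul: "proj_I (mul x y) = mul (proj_I x) (proj_I y)"
proof -
  let ?a = "proj_I x" and ?b = "proj_K x" and ?c = "proj_I y" and ?d = "proj_K y"
  have IK: "?a \<in> I" "?b \<in> K" "?c \<in> I" "?d \<in> K" using x y proj_I_mem proj_K_mem by blast+
  have C: "?a \<in> carr" "?b \<in> carr" "?c \<in> carr" "?d \<in> carr" using IK I_subset K_subset by blast+
  have "add x y = add (add ?a ?b) (add ?c ?d)" using add_proj x y by simp
  also have "\<dots> = add (add ?a ?c) (add ?b ?d)" by (rule add_add_swap[OF C])
  finally have "add x y = add (add ?a ?c) (add ?b ?d)" .
  then show "proj_I (add x y) = add ?a ?c"
    by (rule proj_I_eqI[OF add_closed[OF x y] ideal_add[OF ideal_I IK(1,3)] ideal_add[OF ideal_K IK(2,4)]])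
  have "mul ?a ?d = zero" "mul ?b ?c = zero" using IK mul_I_K mul_K_I by blast+
  moreover have "mul x y = mul (add ?a ?b) (add ?c ?d)" using add_proj x y by simp
  ultimately have "mul x y = add (mul ?a ?c) (mul ?b ?d)"
    using C by (simp add: mul_add_left mul_add_right)
  then show "proj_I (mul x y) = mul ?a ?c"
    by (rule proj_I_eqI[OF mul_closed[OF x y] ideal_mul_left[OF ideal_I C(1) IK(3)]
          ideal_mul_left[OF ideal_K C(2) IK(4)]])
qed

lemma
  assumes x: "x \<in> carr"
  shows proj_I_smul: "proj_I (smul c x) = smul c (proj_I x)"
    and proj_I_star: "proj_I (star x) = star (proj_I x)"
proof -
  have IK: "proj_I x \<in> I" "proj_K x \<in> K" using x proj_I_mem proj_K_mem by blast+
  have C: "proj_I x \<in> carr" "proj_K x \<in> carr" using IK I_subset K_subset by blast+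
  have "smul c x = add (smul c (proj_I x)) (smul c (proj_K x))"
    using add_proj[OF x] C by (simp flip: smul_add)
  then show "proj_I (smul c x) = smul c (proj_I x)"
    by (rule proj_I_eqI[OF smul_closed[OF x] ideal_smul[OF ideal_I IK(1)] ideal_smul[OF ideal_K IK(2)]])
  have "star x = add (star (proj_I x)) (star (proj_K x))"
    using add_proj[OF x] C by (simp flip: star_add)
  moreover have "star (proj_I x) \<in> I" "star (proj_K x) \<in> K" using IK star_I star_K by blast+
  ultimately show "proj_I (star x) = star (proj_I x)" using proj_I_eqI star_closed[OF x] by blast
qed

lemma proj_I_sub: "x \<in> carr \<Longrightarrow> y \<in> carr \<Longrightarrow> proj_I (sub x y) = sub (proj_I x) (proj_I y)"
  unfolding lsub_def by (simp add: proj_I_add proj_I_smul)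

lemma coset_proj_K: "x \<in> carr \<Longrightarrow> coset I x = coset I (proj_K x)"
  using coset_eq_iff[OF ideal_subspace[OF ideal_I]] proj_I_mem proj_K_mem add_proj
    I_subset K_subset
  by (metis (no_types, lifting) add_commute sub_eq_iff_add_eq subsetD)

lemma
  assumes "p \<in> semis" "x \<in> carr"
  shows seminorm_proj_I_le: "p (proj_I x) \<le> p x" and seminorm_proj_K_le: "p (proj_K x) \<le> p x"
  using seminorm_le_add[OF assms(1) proj_I_mem[OF assms(2)] proj_K_mem[OF assms(2)]]
  by (simp_all add: add_proj[OF assms(2)])

lemma Inf_seminorm_coset_eq: "p \<in> semis \<Longrightarrow> x \<in> carr \<Longrightarrow> Inf (p ` coset I x) = p (proj_K x)"
  using coset_proj_K Inf_seminorm_coset proj_K_mem by simp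

definition split_map :: "'a \<Rightarrow> 'a \<times> 'a set" where
  "split_map x = (proj_I x, coset I x)"

lemma bij_split_map: "bij_betw split_map carr (I \<times> coset I ` carr)"
  unfolding bij_betw_def
proof
  show "inj_on split_map carr"
  proof
    fix x y assume x: "x \<in> carr" and y: "y \<in> carr" and eq: "split_map x = split_map y"
    have "proj_K x = proj_K y" using eq coset_proj_K[OF x] coset_proj_K[OF y]
      isometric_star_iso.map_eq_iff[OF isometric_star_iso_quot] proj_K_mem x y
      unfolding split_map_def by (simp add: K_subset)
    moreover have "proj_I x = proj_I y" using eq unfolding split_map_def by simp
    ultimately show "x = y" using add_proj[OF x] add_proj[OF y] by metis
  qed
  show "split_map ` carr = I \<times> coset I ` carr"
  proof (intro equalityI subsetI)
    fix w assume "w \<in> split_map ` carr"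
    then show "w \<in> I \<times> coset I ` carr" unfolding split_map_def using proj_I_mem by blast
  next
    fix w assume "w \<in> I \<times> coset I ` carr"
    then obtain i x where w: "i \<in> I" "x \<in> carr" "w = (i, coset I x)" by blast
    let ?y = "add i (proj_K x)"
    have C: "i \<in> carr" "proj_K x \<in> carr" using w(1) I_subset proj_K_mem[OF w(2)] K_subset by auto
    have "proj_I ?y = i" using proj_I_add_eq[OF w(1) proj_K_mem[OF w(2)]] .
    moreover have "proj_K ?y = proj_K x" unfolding proj_K_def[of ?y] using calculation C
      by (simp add: sub_add_left)
    ultimately have "split_map ?y = w"
      unfolding split_map_def using w coset_proj_K[OF w(2)] coset_proj_K[of ?y] C by simp
    then show "w \<in> split_map ` carr" using C by (metis add_closed image_eqI)
  qed
qed

lemma lsub_split_map: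
  assumes "x \<in> carr" "y \<in> carr"
  shows "lsub (prod_alg (sub_alg A I) (quot_alg A I)) (split_map y) (split_map x)
    = (proj_I (sub y x), coset I (sub y x))"
  unfolding lsub_prod_alg split_map_def
  using proj_I_sub[OF assms(2,1)] quot_sub[OF ideal_subspace[OF ideal_I] assms(2,1)] by simp

lemma homeomorphic_map_split_map:
  "homeomorphic_map (lcs_topology A) (lcs_topology (prod_alg (sub_alg A I) (quot_alg A I))) split_map"
proof (rule homeomorphic_map_lcs_topology)
  let ?P = "prod_alg (sub_alg A I) (quot_alg A I)"
  show "bij_betw split_map carr (lcarrier ?P)" using bij_split_map by simp
next
  let ?P = "prod_alg (sub_alg A I) (quot_alg A I)"
  fix q assume "q \<in> lsemis ?P"
  then obtain p where p: "p \<in> semis"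
    and q: "\<And>x y. x \<in> carr \<Longrightarrow> y \<in> carr \<Longrightarrow> q (lsub ?P (split_map y) (split_map x)) \<le> p (sub y x)"
    using seminorm_proj_I_le seminorm_proj_K_le Inf_seminorm_coset_eq
    by (auto simp: lsub_split_map)
  then show "\<exists>c F. c \<ge> 0 \<and> finite F \<and> F \<subseteq> semis \<and> (\<forall>x\<in>carr. \<forall>y\<in>carr.
      q (lsub ?P (split_map y) (split_map x)) \<le> c * (\<Sum>p\<in>F. p (sub y x)))"
    by (intro exI[of _ 1] exI[of _ "{p}"]) simp
next
  let ?P = "prod_alg (sub_alg A I) (quot_alg A I)"
  fix p assume p: "p \<in> semis"
  define q1 :: "'a \<times> 'a set \<Rightarrow> real" where "q1 = (\<lambda>z. p (fst z))"
  define q2 :: "'a \<times> 'a set \<Rightarrow> real" where "q2 = (\<lambda>z. Inf (p ` snd z))"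
  have "q1 \<in> lsemis ?P" "q2 \<in> lsemis ?P" unfolding q1_def q2_def using p by auto
  moreover have "p (sub y x) \<le> 2 * (\<Sum>q\<in>{q1, q2}. q (lsub ?P (split_map y) (split_map x)))"
    if "x \<in> carr" "y \<in> carr" for x y
  proof -
    let ?w = "sub y x" and ?v = "lsub ?P (split_map y) (split_map x)"
    have w: "?w \<in> carr" using that by simp
    have C: "proj_I ?w \<in> carr" "proj_K ?w \<in> carr"
      using proj_I_mem[OF w] proj_K_mem[OF w] I_subset K_subset by blast+
    have q12: "q1 ?v = p (proj_I ?w)" "q2 ?v = p (proj_K ?w)"
      unfolding q1_def q2_def lsub_split_map[OF that] using Inf_seminorm_coset_eq[OF p w] by simp_all
    have "p ?w \<le> p (proj_I ?w) + p (proj_K ?w)"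
      using seminorm_add[OF p C] add_proj[OF w] by simp
    also have "\<dots> \<le> 2 * (\<Sum>q\<in>{q1, q2}. q ?v)"
      using add_le_double_sum_pair[of "\<lambda>q. q ?v" q1 q2] q12 seminorm_nonneg[OF p C(1)]
        seminorm_nonneg[OF p C(2)]
      by simp
    finally show ?thesis .
  qed
  ultimately show "\<exists>c G. c \<ge> 0 \<and> finite G \<and> G \<subseteq> lsemis ?P \<and> (\<forall>x\<in>carr. \<forall>y\<in>carr.
      p (sub y x) \<le> c * (\<Sum>q\<in>G. q (lsub ?P (split_map y) (split_map x))))"
    by (intro exI[of _ 2] exI[of _ "{q1, q2}"]) auto
qed

lemma top_star_iso_split_map: "top_star_iso A (prod_alg (sub_alg A I) (quot_alg A I)) split_map"
  unfolding top_star_iso_def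
proof (intro conjI ballI allI)
  let ?P = "prod_alg (sub_alg A I) (quot_alg A I)"
  note I = ideal_subspace[OF ideal_I]
  fix x assume x: "x \<in> carr"
  { fix y assume y: "y \<in> carr"
    show "split_map (add x y) = ladd ?P (split_map x) (split_map y)"
      unfolding split_map_def using proj_I_add[OF x y] quot_add[OF I x y] by simp
    show "split_map (mul x y) = lmult ?P (split_map x) (split_map y)"
      unfolding split_map_def using proj_I_mul[OF x y] quot_mul[OF ideal_I x y] by simp }
  show "split_map (smul c x) = lsmult ?P c (split_map x)" for c
    unfolding split_map_def using proj_I_smul[OF x] quot_smul[OF I x] by simp
  show "split_map (star x) = lstar ?P (split_map x)"
    unfolding split_map_def using proj_I_star[OF x] quot_star[OF I star_I x] by simp
qed (use bij_split_map homeomorphic_map_split_map in simp_all)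

end

lemma (in locally_cstar_algebra) orthogonal_ideals_lan:
  assumes ann: "left_annihilator_alg A"
    and I: "two_sided_ideal A I" "closedin (lcs_topology A) I"
  shows "orthogonal_ideals A I (lan A I)"
proof -
  have star_I: "star ` I \<subseteq> I" by (rule star_image_subset_ideal[OF ann I])
  show ?thesis
    unfolding orthogonal_ideals_def orthogonal_ideals_axioms_def
  proof (intro conjI allI impI)
    show "locally_cstar_algebra A" by unfold_locales
    show "two_sided_ideal A (lan A I)" by (rule ideal_lan[OF I(1)])
    show "closedin (lcs_topology A) (lan A I)" by (rule closedin_lan[OF ideal_subset[OF I(1)]])
    show "star ` lan A I \<subseteq> lan A I" by (rule star_lan_subset[OF I(1) star_I])
    show "sumset A I (lan A I) = carr" by (rule sumset_lan_eq_carr[OF ann I star_I])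
    show "mul i k = zero" if "i \<in> I" "k \<in> lan A I" for i k
      using that ran_eq_lan[OF I(1) star_I] unfolding ran_def by blast
  qed (use I star_I in auto)
qed

theorem proposition3p26:
  fixes A :: "'a lcs_alg" and I :: "'a set"
  assumes "annihilator_locally_cstar A"
    and "closed_ideal A I"
  shows "annihilator_locally_cstar (sub_alg A I) \<and>
         annihilator_locally_cstar (quot_alg A I) \<and>
         (\<exists>f. top_star_iso A (prod_alg (sub_alg A I) (quot_alg A I)) f)"
proof -
  interpret locally_cstar_algebra A
    using assms(1) unfolding annihilator_locally_cstar_def locally_cstar_algebra_def by blast
  have ann: "annihilator_alg A" using assms(1) unfolding annihilator_locally_cstar_def by blast
  then have "left_annihilator_alg A" unfolding annihilator_alg_iff_left_annihilator by blast
  moreover have "two_sided_ideal A I" "closedin (lcs_topology A) I"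
    using assms(2) unfolding closed_ideal_iff by auto
  ultimately interpret orthogonal_ideals A I "lan A I" by (rule orthogonal_ideals_lan)
  have "annihilator_locally_cstar (sub_alg A I)"
    unfolding annihilator_locally_cstar_def using locally_cstar_sub_alg_I annihilator_sub_alg[OF ann] ..
  then show ?thesis using annihilator_locally_cstar_quot[OF ann] top_star_iso_split_map by blast
qed

end
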